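(* Let $n\ge 2$ be an integer and $\Pi_1,\Pi_2,\Pi_3>0$. Let $\mathbb{D}^2$ be the $n\times n$ circulant matrix with first row $(-2,1,0,\ldots,0,1)$, and let $A=\begin{bmatrix}0&I\\ \mathbb{D}^2&0\end{bmatrix}$, $B=\begin{bmatrix}0\\ I\end{bmatrix}$. Consider the linear quadratic regulator problem: minimize $$\int_0^\infty \boldsymbol{\Phi}(\tau)^T\begin{bmatrix}I-\Pi_1\mathbb{D}^2&0\\0&\Pi_2 I\end{bmatrix}\boldsymbol{\Phi}(\tau)+\frac{1}{\Pi_3^2}\boldsymbol{\omega}(\tau)^T\boldsymbol{\omega}(\tau)\,d\tau$$ subject to $\frac{d}{d\tau}\boldsymbol{\Phi}(\tau)=A\boldsymbol{\Phi}(\tau)+B\boldsymbol{\omega}(\tau)$, $\boldsymbol{\Phi}(\tau)\in\mathbb{R}^{2n}$, $\boldsymbol{\omega}(\tau)\in\mathbb{R}^n$. Then the optimal feedback gain $K$ (optimal control $\boldsymbol{\omega}=-K\boldsymbol{\Phi}$) is $K=\begin{bmatrix}K_1&K_2\end{bmatrix}$ with circulant matrices $$K_1=F^{-1}\mathrm{diag}\big(\hat{K}_0(\kappa)\big)F,\qquad K_2=F^{-1}\mathrm{diag}\Big(\sqrt{2\hat{K}_0(\kappa)+\Pi_2\Pi_3^2}\Big)F,$$ where, for $\kappa\in\{0,\ldots,n-1\}$, $$\hat{K}_0(\kappa)=\hat{D}_{\kappa\kappa}+\sqrt{\hat{D}_{\kappa\kappa}^2+\Pi_3^2\big(1-\Pi_1\hat{D}_{\kappa\kappa}\big)},\qquad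 \hat{D}_{\kappa\kappa}=-4\sin^2\!\left(\frac{\pi\kappa}{n}\right).$$ Equivalently, $\hat{K}(\kappa)=\begin{bmatrix}\hat{K}_0(\kappa)&\sqrt{2\hat{K}_0(\kappa)+\Pi_2\Pi_3^2}\end{bmatrix}$.
   Context: $F$ denotes the $n\times n$ unitary discrete Fourier transform matrix, $F_{kj}=n^{-1/2}e^{-2\pi i kj/n}$, $k,j\in\{0,\ldots,n-1\}$; $\mathrm{diag}(f(\kappa))$ is the diagonal matrix with $\kappa$-th diagonal entry $f(\kappa)$. The optimal LQR gain for cost $\int\boldsymbol{\Phi}^TQ\boldsymbol{\Phi}+\boldsymbol{\omega}^TR\boldsymbol{\omega}$ is $K=R^{-1}B^TP$ with $P$ the symmetric positive definite (stabilizing) solution of $PA+A^TP-PBR^{-1}B^TP+Q=0$. The weight $I-\Pi_1\mathbb{D}^2$ is a discretized Sobolev-type ($\mathcal{H}^1$-like) weight, with $\Pi_1=\alpha^2/\Delta x^2$ weighting potential energy, $\Pi_2$ kinetic energy, $1/\Pi_3$ control effort. *)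

theory Defs
  imports Complex_Main "Jordan_Normal_Form.Matrix" "Jordan_Normal_Form.Gauss_Jordan_Elimination"
begin

text \<open>Entry (i,j) collects the contributions of the superdiagonal and subdiagonal (cyclic)
  neighbours, so that for n = 2 the off-diagonal entry is 1 + 1 = 2.\<close>
definition circD2 :: "nat \<Rightarrow> real mat" where
  "circD2 n = mat n n (\<lambda>(i,j).
      (if j = (i + 1) mod n then 1 else 0) + (if i = (j + 1) mod n then 1 else 0)
      - (if i = j then 2 else 0))"

definition sysA :: "nat \<Rightarrow> real mat" where
  "sysA n = four_block_mat (0\<^sub>m n n) (1\<^sub>m n) (circD2 n) (0\<^sub>m n n)"

definition sysB :: "nat \<Rightarrow> real mat" where
  "sysB n = four_block_mat (0\<^sub>m n n) (0\<^sub>m n 0) (1\<^sub>m n) (0\<^sub>m n 0)"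

definition weightQ :: "nat \<Rightarrow> real \<Rightarrow> real \<Rightarrow> real mat" where
  "weightQ n Pi1 Pi2 = four_block_mat (1\<^sub>m n - Pi1 \<cdot>\<^sub>m circD2 n) (0\<^sub>m n n)
                                       (0\<^sub>m n n) (Pi2 \<cdot>\<^sub>m 1\<^sub>m n)"

definition weightR :: "nat \<Rightarrow> real \<Rightarrow> real mat" where
  "weightR n Pi3 = (1 / Pi3 ^ 2) \<cdot>\<^sub>m 1\<^sub>m n"

definition Rinv :: "nat \<Rightarrow> real \<Rightarrow> real mat" where
  "Rinv n Pi3 = the (mat_inverse (weightR n Pi3))"

definition sym_pos_def :: "nat \<Rightarrow> real mat \<Rightarrow> bool" where
  "sym_pos_def m P \<longleftrightarrow> P \<in> carrier_mat m m \<and> transpose_mat P = P \<and>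
     (\<forall>x \<in> carrier_vec m. x \<noteq> 0\<^sub>v m \<longrightarrow> scalar_prod x (P *\<^sub>v x) > 0)"

definition riccati_spd_solution :: "nat \<Rightarrow> real \<Rightarrow> real \<Rightarrow> real \<Rightarrow> real mat \<Rightarrow> bool" where
  "riccati_spd_solution n Pi1 Pi2 Pi3 P \<longleftrightarrow> sym_pos_def (2 * n) P \<and>
     P * sysA n + transpose_mat (sysA n) * P
       - P * sysB n * Rinv n Pi3 * transpose_mat (sysB n) * P + weightQ n Pi1 Pi2
     = 0\<^sub>m (2 * n) (2 * n)"

definition lqr_gain :: "nat \<Rightarrow> real \<Rightarrow> real mat \<Rightarrow> real mat" where
  "lqr_gain n Pi3 P = Rinv n Pi3 * transpose_mat (sysB n) * P"

definition dft :: "nat \<Rightarrow> complex mat" where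
  "dft n = mat n n (\<lambda>(k,j). complex_of_real (1 / sqrt (real n))
                       * exp (- 2 * complex_of_real pi * \<i> * of_nat (k * j) / of_nat n))"

definition Dhat :: "nat \<Rightarrow> nat \<Rightarrow> real" where
  "Dhat n k = - 4 * (sin (pi * real k / real n))^2"

definition K0hat :: "nat \<Rightarrow> real \<Rightarrow> real \<Rightarrow> nat \<Rightarrow> real" where
  "K0hat n Pi1 Pi3 k = Dhat n k + sqrt ((Dhat n k)^2 + Pi3^2 * (1 - Pi1 * Dhat n k))"

end

theory Submission
  imports Defs "Jordan_Normal_Form.Char_Poly"
begin

text \<open>All matrices of the problem are (block) circulant, hence diagonalised by the discrete
  Fourier transform, and the Riccati equation decouples into \<open>n\<close> independent \<open>2 \<times> 2\<close> Riccati
  equations, one for each Fourier mode \<open>\<kappa>\<close>. Each of them has an explicit positive definite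
  solution built from \<open>K\<^sub>0(\<kappa>)\<close> and \<open>K\<^sub>2(\<kappa>) = sqrt (2 K\<^sub>0(\<kappa>) + \<Pi>\<^sub>2 \<Pi>\<^sub>3\<^sup>2)\<close>; together
  they form a symmetric positive definite solution \<open>P\<^sub>*\<close>, whose gain \<open>R\<^sup>-\<^sup>1 B\<^sup>T P\<^sub>*\<close> is read off
  blockwise.

  For uniqueness, let \<open>P\<close> be any positive definite solution and \<open>G = B R\<^sup>-\<^sup>1 B\<^sup>T\<close>. Then \<open>P\<close> is a
  Lyapunov function for the closed loop \<open>A - G P\<close>, so \<open>(A - G P)\<^sup>T\<close> is Hurwitz, and
  \<open>X = P - P\<^sub>*\<close> solves the Sylvester equation \<open>X (A - G P\<^sub>*) + (A - G P)\<^sup>T X = 0\<close>. On each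
  Fourier mode \<open>A - G P\<^sub>*\<close> satisfies \<open>s\<^sup>2 + K\<^sub>2 s + Y = 0\<close> with \<open>K\<^sub>2, Y > 0\<close>, whose roots are
  not eigenvalues of \<open>-(A - G P)\<^sup>T\<close>; hence \<open>X\<close> vanishes on every mode.\<close>

lemma the_mat_inverse_eqI:
  fixes A B :: "'a :: field mat"
  assumes A: "A \<in> carrier_mat n n" and B: "B \<in> carrier_mat n n" and AB: "A * B = 1\<^sub>m n"
  shows "the (mat_inverse A) = B"
proof -
  have BA: "B * A = 1\<^sub>m n"
    by (rule mat_mult_left_right_inverse[OF A B AB])
  have "A \<in> Units (ring_mat TYPE('a) n undefined)"
    unfolding Units_def ring_mat_def using A B AB BA by auto
  then obtain C where C: "mat_inverse A = Some C"
    using mat_inverse(1)[OF A, of undefined] by (cases "mat_inverse A") auto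
  from mat_inverse(2)[OF A C] have AC: "A * C = 1\<^sub>m n" and C': "C \<in> carrier_mat n n"
    by auto
  have "C = B * A * C"
    using BA C' by simp
  also have "\<dots> = B"
    using A B AC C' by (simp add: assoc_mult_mat[of B n n A n C n])
  finally show ?thesis
    using C by simp
qed

abbreviation cmat :: "real mat \<Rightarrow> complex mat" where
  "cmat \<equiv> map_mat complex_of_real"

lemma dim_mat_diag [simp]: "dim_row (mat_diag n f) = n" "dim_col (mat_diag n f) = n"
  unfolding mat_diag_def by simp_all

lemma mat_diag_mult_vec: "v \<in> carrier_vec n \<Longrightarrow> i < n \<Longrightarrow> (mat_diag n f *\<^sub>v v) $ i = f i * v $ i"
proof -
  assume v: "v \<in> carrier_vec n" and i: "i < n"
  have "(mat_diag n f *\<^sub>v v) $ i = (\<Sum>j<n. (if i = j then f j else 0) * v $ j)"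
    using v i by (simp add: mat_diag_def scalar_prod_def lessThan_atLeast0)
  also have "\<dots> = (\<Sum>j<n. if j = i then f i * v $ i else 0)"
    by (rule sum.cong) auto
  finally show ?thesis
    using i by simp
qed

lemma zero_mat_mult_vec [simp]: "v \<in> carrier_vec m \<Longrightarrow> 0\<^sub>m k m *\<^sub>v v = (0\<^sub>v k :: 'a :: semiring_0 vec)"
  by (rule eq_vecI) (auto simp: scalar_prod_def)

lemma smult_zero_vec [simp]: "c \<cdot>\<^sub>v 0\<^sub>v k = (0\<^sub>v k :: 'a :: mult_zero vec)"
  by (rule eq_vecI) auto

lemma four_block_mat_empty_blocks: "A \<in> carrier_mat nr nc \<Longrightarrow> four_block_mat A (0\<^sub>m nr 0) (0\<^sub>m 0 nc) (0\<^sub>m 0 0) = A"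
  by (rule eq_matI) auto

lemma eigenvalue_transpose_mat:
  fixes A :: "'a :: field mat"
  assumes "A \<in> carrier_mat n n"
  shows "eigenvalue (transpose_mat A) \<mu> \<longleftrightarrow> eigenvalue A \<mu>"
  using assms by (simp add: eigenvalue_root_char_poly[of _ n])

section \<open>Roots of unity and the discrete Fourier transform\<close>

definition unity_root :: "nat \<Rightarrow> int \<Rightarrow> complex" where
  "unity_root n t = cis (2 * pi * real_of_int t / real n)"

lemma unity_root_add: "unity_root n (a + b) = unity_root n a * unity_root n b"
  unfolding unity_root_def cis_mult by (simp add: add_divide_distrib distrib_left)

lemma unity_root_power: "unity_root n t ^ j = unity_root n (t * int j)"
  unfolding unity_root_def DeMoivre by (simp add: algebra_simps)

lemma cnj_unity_root: "cnj (unity_root n t) = unity_root n (- t)"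
  unfolding unity_root_def cis_cnj by simp

lemma unity_root_conv_Complex:
  "unity_root n t = Complex (cos (2 * pi * real_of_int t / real n)) (sin (2 * pi * real_of_int t / real n))"
  unfolding unity_root_def by (simp add: complex_eq_iff)

lemma unity_root_eq_1_iff:
  assumes "n > 0"
  shows "unity_root n t = 1 \<longleftrightarrow> int n dvd t"
proof
  assume "unity_root n t = 1"
  then have "cos (2 * pi * real_of_int t / real n) = 1"
    unfolding unity_root_conv_Complex by (simp add: complex_eq_iff)
  then obtain m :: int where "2 * pi * real_of_int t / real n = real_of_int m * 2 * pi"
    unfolding cos_one_2pi_int by blast
  then have "real_of_int t = real_of_int (m * int n)"
    using assms by (simp add: field_simps)
  then show "int n dvd t" by (metis dvd_triv_right of_int_eq_iff)
next
  assume "int n dvd t"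
  then obtain m where "t = int n * m" by blast
  then have "2 * pi * real_of_int t / real n = 2 * pi * real_of_int m"
    using assms by simp
  then show "unity_root n t = 1"
    unfolding unity_root_conv_Complex by (simp add: complex_eq_iff sin_int_2pin cos_int_2pin)
qed

lemma sum_unity_root:
  assumes "n > 0"
  shows "(\<Sum>j<n. unity_root n (int j * t)) = (if int n dvd t then of_nat n else 0)"
proof (cases "int n dvd t")
  case True
  then obtain m where t: "t = int n * m" by blast
  have "unity_root n (int j * t) = 1" for j
    unfolding unity_root_eq_1_iff[OF assms] t by simp
  then show ?thesis
    using True by simp
next
  case False
  have "unity_root n t ^ n = 1"
    unfolding unity_root_power unity_root_eq_1_iff[OF assms] by simp
  moreover have "unity_root n t \<noteq> 1"
    using False unity_root_eq_1_iff[OF assms] by simp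
  ultimately have "(\<Sum>j<n. unity_root n t ^ j) = 0"
    unfolding sum_gp_strict by simp
  then show ?thesis
    using False by (simp add: unity_root_power mult.commute)
qed

lemma int_dvd_diff_iff_eq:
  assumes "i < n" "j < n"
  shows "int n dvd (int j - int i) \<longleftrightarrow> i = j"
  using assms dvd_imp_le_int[of "int j - int i" "int n"] by fastforce

definition idft :: "nat \<Rightarrow> complex mat" where
  "idft n = mat n n (\<lambda>(j, k). complex_of_real (1 / sqrt (real n)) * unity_root n (int (j * k)))"

lemma dft_carrier [simp]: "dft n \<in> carrier_mat n n"
  and idft_carrier [simp]: "idft n \<in> carrier_mat n n"
  unfolding dft_def idft_def by simp_all

lemma dim_dft [simp]: "dim_row (dft n) = n" "dim_col (dft n) = n"
  and dim_idft [simp]: "dim_row (idft n) = n" "dim_col (idft n) = n"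
  unfolding dft_def idft_def by simp_all

lemma dft_index:
  assumes "i < n" "j < n"
  shows "dft n $$ (i, j) = complex_of_real (1 / sqrt (real n)) * unity_root n (- int (i * j))"
proof -
  have "- 2 * complex_of_real pi * \<i> * of_nat (i * j) / of_nat n
      = \<i> * complex_of_real (2 * pi * real_of_int (- int (i * j)) / real n)"
    by (simp add: field_simps)
  then have "exp (- 2 * complex_of_real pi * \<i> * of_nat (i * j) / of_nat n)
      = unity_root n (- int (i * j))"
    unfolding unity_root_def cis_conv_exp by (simp only:)
  then show ?thesis
    using assms unfolding dft_def by simp
qed

lemma idft_index:
  "i < n \<Longrightarrow> j < n \<Longrightarrow>
    idft n $$ (i, j) = complex_of_real (1 / sqrt (real n)) * unity_root n (int (i * j))"
  unfolding idft_def by simp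

lemma inverse_sqrt_squared:
  "n > 0 \<Longrightarrow> complex_of_real (1 / sqrt (real n)) * complex_of_real (1 / sqrt (real n)) = 1 / of_nat n"
proof -
  assume "n > 0"
  then have "(1 / sqrt (real n)) * (1 / sqrt (real n)) = 1 / real n"
    by (simp add: real_sqrt_mult[symmetric])
  then show ?thesis
    by (metis of_real_divide of_real_mult of_real_of_nat_eq of_real_1)
qed

lemma dft_mult_idft:
  assumes n: "n > 0"
  shows "dft n * idft n = 1\<^sub>m n"
proof (rule eq_matI)
  fix i j assume "i < dim_row (1\<^sub>m n)" "j < dim_col (1\<^sub>m n)"
  then have i: "i < n" and j: "j < n" by auto
  let ?c = "complex_of_real (1 / sqrt (real n))"
  have "(dft n * idft n) $$ (i, j) = (\<Sum>l<n. dft n $$ (i, l) * idft n $$ (l, j))"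
    using i j by (simp add: scalar_prod_def lessThan_atLeast0)
  also have "\<dots> = (\<Sum>l<n. (?c * ?c) * unity_root n (int l * (int j - int i)))"
    by (rule sum.cong, simp, simp add: dft_index idft_index i j unity_root_add[symmetric] algebra_simps)
  also have "\<dots> = 1\<^sub>m n $$ (i, j)"
    unfolding sum_distrib_left[symmetric] sum_unity_root[OF n] inverse_sqrt_squared[OF n]
      int_dvd_diff_iff_eq[OF i j] using i j n by auto
  finally show "(dft n * idft n) $$ (i, j) = 1\<^sub>m n $$ (i, j)" .
qed auto

lemma idft_mult_dft: "n > 0 \<Longrightarrow> idft n * dft n = 1\<^sub>m n"
  by (rule mat_mult_left_right_inverse[OF dft_carrier idft_carrier dft_mult_idft])

lemma mat_inverse_dft: "n > 0 \<Longrightarrow> the (mat_inverse (dft n)) = idft n"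
  by (rule the_mat_inverse_eqI) (simp_all add: dft_mult_idft)

lemma dft_mult_vec_eq_0:
  assumes n: "n > 0" and a: "a \<in> carrier_vec n" and "dft n *\<^sub>v a = 0\<^sub>v n"
  shows "a = 0\<^sub>v n"
proof -
  have "a = idft n *\<^sub>v (dft n *\<^sub>v a)"
    using a by (simp add: assoc_mult_mat_vec[symmetric, of _ n n _ n] idft_mult_dft[OF n])
  also have "\<dots> = 0\<^sub>v n"
    unfolding assms(3) by (rule eq_vecI) (auto simp: scalar_prod_def)
  finally show ?thesis .
qed

section \<open>Circulant matrices\<close>

text \<open>\<open>circulant n f\<close> is \<open>F\<^sup>-\<^sup>1 diag(f) F\<close> written out entrywise, so \<open>f k\<close> is its eigenvalue on
  the \<open>k\<close>-th Fourier mode.\<close>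

definition circulant :: "nat \<Rightarrow> (nat \<Rightarrow> complex) \<Rightarrow> complex mat" where
  "circulant n f = mat n n (\<lambda>(i, j). (\<Sum>l<n. f l * unity_root n (int l * (int i - int j))) / of_nat n)"

lemma circulant_carrier [simp]: "circulant n f \<in> carrier_mat n n"
  and dim_circulant [simp]: "dim_row (circulant n f) = n" "dim_col (circulant n f) = n"
  unfolding circulant_def by simp_all

lemma idft_diag_dft:
  assumes n: "n > 0"
  shows "idft n * mat_diag n f * dft n = circulant n f"
proof (rule eq_matI)
  fix i j assume "i < dim_row (circulant n f)" "j < dim_col (circulant n f)"
  then have i: "i < n" and j: "j < n" by auto
  let ?c = "complex_of_real (1 / sqrt (real n))"
  have "idft n * mat_diag n f = mat n n (\<lambda>(i, j). idft n $$ (i, j) * f j)"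
    by (rule mat_diag_mult_right) simp
  then have "(idft n * mat_diag n f * dft n) $$ (i, j)
      = (\<Sum>l<n. idft n $$ (i, l) * f l * dft n $$ (l, j))"
    using i j by (simp add: scalar_prod_def lessThan_atLeast0)
  also have "\<dots> = (\<Sum>l<n. (?c * ?c) * (f l * unity_root n (int l * (int i - int j))))"
    by (rule sum.cong, simp, simp add: dft_index idft_index i j unity_root_add[symmetric] algebra_simps)
  also have "\<dots> = circulant n f $$ (i, j)"
    unfolding circulant_def inverse_sqrt_squared[OF n] sum_distrib_left[symmetric] using i j by simp
  finally show "(idft n * mat_diag n f * dft n) $$ (i, j) = circulant n f $$ (i, j)" .
qed auto

lemma circulant_mult:
  assumes n: "n > 0"
  shows "circulant n f * circulant n g = circulant n (\<lambda>k. f k * g k)"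
proof -
  have dft_idft_cancel: "dft n * (idft n * X) = X" if "X \<in> carrier_mat n n" for X
    using that by (simp add: assoc_mult_mat[symmetric, of _ n n _ n] dft_mult_idft[OF n])
  have "circulant n f * circulant n g
      = (idft n * mat_diag n f * dft n) * (idft n * mat_diag n g * dft n)"
    unfolding idft_diag_dft[OF n] ..
  also have "\<dots> = idft n * (mat_diag n f * (dft n * (idft n * (mat_diag n g * dft n))))"
    by (simp add: assoc_mult_mat[of _ n n _ n _ n] mult_carrier_mat[of _ n n _ n])
  also have "\<dots> = idft n * (mat_diag n f * (mat_diag n g * dft n))"
    using dft_idft_cancel[OF mult_carrier_mat[OF mat_diag_dim dft_carrier]] by simp
  also have "\<dots> = idft n * mat_diag n (\<lambda>k. f k * g k) * dft n"
    by (simp add: assoc_mult_mat[of _ n n _ n _ n, symmetric])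
  finally show ?thesis
    unfolding idft_diag_dft[OF n] .
qed

lemma circulant_add: "circulant n f + circulant n g = circulant n (\<lambda>k. f k + g k)"
  by (rule eq_matI) (auto simp: circulant_def sum.distrib add_divide_distrib ring_distribs)

lemma circulant_diff: "circulant n f - circulant n g = circulant n (\<lambda>k. f k - g k)"
  by (rule eq_matI) (auto simp: circulant_def sum_subtractf diff_divide_distrib ring_distribs)

lemma smult_circulant: "c \<cdot>\<^sub>m circulant n f = circulant n (\<lambda>k. c * f k)"
  by (rule eq_matI) (auto simp: circulant_def sum_distrib_left mult.assoc)

lemma circulant_const_1: "n > 0 \<Longrightarrow> circulant n (\<lambda>k. 1) = 1\<^sub>m n"
  by (rule eq_matI) (auto simp: circulant_def sum_unity_root int_dvd_diff_iff_eq)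

lemma circulant_const: "n > 0 \<Longrightarrow> circulant n (\<lambda>k. c) = c \<cdot>\<^sub>m 1\<^sub>m n"
  using smult_circulant[of c n "\<lambda>k. 1"] by (simp add: circulant_const_1)

lemma circulant_const_0: "circulant n (\<lambda>k. 0) = 0\<^sub>m n n"
  by (rule eq_matI) (auto simp: circulant_def)

lemma circulant_cong: "(\<And>k. k < n \<Longrightarrow> f k = g k) \<Longrightarrow> circulant n f = circulant n g"
  unfolding circulant_def by (intro eq_matI) (auto intro!: sum.cong)

definition fourier_mode :: "nat \<Rightarrow> nat \<Rightarrow> complex vec" where
  "fourier_mode n k = vec n (\<lambda>j. unity_root n (int j * int k))"

lemma fourier_mode_carrier [simp]: "fourier_mode n k \<in> carrier_vec n"
  and dim_fourier_mode [simp]: "dim_vec (fourier_mode n k) = n"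
  unfolding fourier_mode_def by simp_all

lemma circulant_mult_fourier_mode:
  assumes n: "n > 0" and k: "k < n"
  shows "circulant n f *\<^sub>v fourier_mode n k = f k \<cdot>\<^sub>v fourier_mode n k"
proof (rule eq_vecI)
  fix i assume "i < dim_vec (f k \<cdot>\<^sub>v fourier_mode n k)"
  then have i: "i < n" by simp
  have "(circulant n f *\<^sub>v fourier_mode n k) $ i
      = (\<Sum>j<n. (\<Sum>l<n. f l * unity_root n (int l * (int i - int j))) / of_nat n
                * unity_root n (int j * int k))"
    using i by (simp add: circulant_def fourier_mode_def scalar_prod_def lessThan_atLeast0)
  also have "\<dots> = (\<Sum>j<n. \<Sum>l<n. f l * unity_root n (int l * int i) / of_nat n
                * unity_root n (int j * (int k - int l)))"
    by (rule sum.cong, simp, simp add: sum_divide_distrib sum_distrib_right,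
        rule sum.cong, simp, simp add: unity_root_add[symmetric] algebra_simps)
  also have "\<dots> = (\<Sum>l<n. f l * unity_root n (int l * int i) / of_nat n
                * (\<Sum>j<n. unity_root n (int j * (int k - int l))))"
    by (subst sum.swap) (simp add: sum_distrib_left)
  also have "\<dots> = (\<Sum>l<n. if l = k then f k * unity_root n (int k * int i) else 0)"
    by (rule sum.cong, simp, simp add: sum_unity_root int_dvd_diff_iff_eq k n)
  also have "\<dots> = (f k \<cdot>\<^sub>v fourier_mode n k) $ i"
    using i k by (simp add: fourier_mode_def mult.commute)
  finally show "(circulant n f *\<^sub>v fourier_mode n k) $ i = (f k \<cdot>\<^sub>v fourier_mode n k) $ i" .
qed simp

text \<open>A symbol with \<open>f (n - l) = f l\<close> has a real-valued inverse transform, so its circulant is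
  real and symmetric; \<open>real_circulant\<close> writes it with cosines.\<close>

definition symmetric_symbol :: "nat \<Rightarrow> (nat \<Rightarrow> real) \<Rightarrow> bool" where
  "symmetric_symbol n f \<longleftrightarrow> (\<forall>l. 0 < l \<and> l < n \<longrightarrow> f (n - l) = f l)"

definition real_circulant :: "nat \<Rightarrow> (nat \<Rightarrow> real) \<Rightarrow> real mat" where
  "real_circulant n f =
     mat n n (\<lambda>(i, j). (\<Sum>l<n. f l * cos (2 * pi * real l * (real i - real j) / real n)) / real n)"

lemma real_circulant_carrier [simp]: "real_circulant n f \<in> carrier_mat n n"
  unfolding real_circulant_def by simp

lemma dim_real_circulant [simp]: "dim_row (real_circulant n f) = n" "dim_col (real_circulant n f) = n"
  unfolding real_circulant_def by simp_all

lemma transpose_real_circulant: "transpose_mat (real_circulant n f) = real_circulant n f"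
proof (rule eq_matI)
  fix i j assume "i < dim_row (real_circulant n f)" "j < dim_col (real_circulant n f)"
  then have i: "i < n" and j: "j < n" by (auto simp: real_circulant_def)
  have "2 * pi * real l * (real j - real i) / real n = - (2 * pi * real l * (real i - real j) / real n)"
    for l by (simp only: minus_divide_left) (simp add: algebra_simps)
  then show "transpose_mat (real_circulant n f) $$ (i, j) = real_circulant n f $$ (i, j)"
    using i j by (simp add: real_circulant_def)
qed (auto simp: real_circulant_def)

lemma sum_sin_symmetric_symbol:
  assumes "symmetric_symbol n f"
  shows "(\<Sum>l<n. f l * sin (2 * pi * real l * real_of_int t / real n)) = 0"
proof -
  define g where "g l = f l * sin (2 * pi * real l * real_of_int t / real n)" for l
  define refl where "refl l = (if l = 0 then 0 else n - l)" for l :: nat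
  have g_refl: "g (refl l) = - g l" if "l < n" for l
  proof (cases "l = 0")
    case False
    have "2 * pi * real (n - l) * real_of_int t / real n
        = 2 * pi * real_of_int t - 2 * pi * real l * real_of_int t / real n"
      using that False by (simp add: of_nat_diff field_simps)
    then have "sin (2 * pi * real (n - l) * real_of_int t / real n)
        = - sin (2 * pi * real l * real_of_int t / real n)"
      by (simp add: sin_diff)
    then show ?thesis
      using False that assms unfolding g_def refl_def symmetric_symbol_def by simp
  qed (simp add: g_def refl_def)
  have "sum g {..<n} = sum (g \<circ> refl) {..<n}"
    by (rule sum.reindex_bij_witness[of _ refl refl]) (auto simp: refl_def)
  also have "\<dots> = - sum g {..<n}"
    by (simp add: g_refl sum_negf)
  finally show ?thesis
    unfolding g_def by simp
qed

lemma cmat_real_circulant: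
  assumes "symmetric_symbol n f"
  shows "cmat (real_circulant n f) = circulant n (\<lambda>k. complex_of_real (f k))"
proof (rule eq_matI)
  fix i j assume "i < dim_row (circulant n (\<lambda>k. complex_of_real (f k)))"
    "j < dim_col (circulant n (\<lambda>k. complex_of_real (f k)))"
  then have i: "i < n" and j: "j < n" by auto
  let ?t = "int i - int j"
  have "(\<Sum>l<n. complex_of_real (f l) * unity_root n (int l * ?t))
      = (\<Sum>l<n. Complex (f l * cos (2 * pi * real l * real_of_int ?t / real n))
                        (f l * sin (2 * pi * real l * real_of_int ?t / real n)))"
    by (rule sum.cong) (simp_all add: unity_root_conv_Complex complex_eq_iff mult.assoc)
  also have "\<dots> = complex_of_real (\<Sum>l<n. f l * cos (2 * pi * real l * (real i - real j) / real n))"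
    using sum_sin_symmetric_symbol[OF assms, of ?t] by (simp add: complex_eq_iff)
  finally show "cmat (real_circulant n f) $$ (i, j)
      = circulant n (\<lambda>k. complex_of_real (f k)) $$ (i, j)"
    using i j by (simp add: real_circulant_def circulant_def)
qed (auto simp: real_circulant_def)

section \<open>The periodic second difference\<close>

lemma int_dvd_succ_iff:
  assumes i: "i < n" and j: "j < n"
  shows "int n dvd (int i - int j + 1) \<longleftrightarrow> j = (i + 1) mod n"
proof (cases "i + 1 < n")
  case True
  then show ?thesis
    using i j dvd_imp_le_int[of "int i - int j + 1" "int n"] by fastforce
next
  case False
  then have "i = n - 1"
    using i by simp
  then have "(i + 1) mod n = 0"
    using i by simp
  show ?thesis
  proof (cases "j = 0")
    case True
    then show ?thesis
      using \<open>i = n - 1\<close> \<open>(i + 1) mod n = 0\<close> i by simp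
  next
    case False
    then have "0 < int i - int j + 1" "int i - int j + 1 < int n"
      using \<open>i = n - 1\<close> j by auto
    then have "\<not> int n dvd (int i - int j + 1)"
      using zdvd_imp_le by fastforce
    then show ?thesis
      using False \<open>(i + 1) mod n = 0\<close> by simp
  qed
qed

lemma int_dvd_pred_iff:
  assumes "i < n" "j < n"
  shows "int n dvd (int i - int j - 1) \<longleftrightarrow> i = (j + 1) mod n"
proof -
  have "int n dvd (int i - int j - 1) \<longleftrightarrow> int n dvd (int j - int i + 1)"
    by (metis dvd_minus_iff minus_diff_eq diff_diff_eq2 add.commute diff_add_eq)
  then show ?thesis
    using int_dvd_succ_iff[OF assms(2,1)] by simp
qed

lemma Dhat_conv_unity_root:
  "complex_of_real (Dhat n l) = unity_root n (int l) + unity_root n (- int l) - 2"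
proof -
  let ?x = "pi * real l / real n"
  have "Dhat n l = 2 * cos (2 * ?x) - 2"
    unfolding Dhat_def cos_double_sin by simp
  also have "2 * ?x = 2 * pi * real_of_int (int l) / real n"
    by simp
  finally show ?thesis
    unfolding unity_root_conv_Complex by (simp add: complex_eq_iff)
qed

lemma Dhat_nonpos: "Dhat n k \<le> 0"
  unfolding Dhat_def by simp

lemma one_le_potential_weight: "Pi1 \<ge> 0 \<Longrightarrow> 1 - Pi1 * Dhat n k \<ge> 1"
  using Dhat_nonpos[of n k] by (simp add: mult_nonneg_nonpos)

lemma symmetric_symbol_Dhat: "symmetric_symbol n (Dhat n)"
  unfolding symmetric_symbol_def
proof (intro allI impI)
  fix l assume "0 < l \<and> l < n"
  then have "pi * real (n - l) / real n = pi - pi * real l / real n"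
    by (simp add: of_nat_diff field_simps)
  then show "Dhat n (n - l) = Dhat n l"
    unfolding Dhat_def by (simp add: sin_pi_minus)
qed

lemma circD2_carrier [simp]: "circD2 n \<in> carrier_mat n n"
  and dim_circD2 [simp]: "dim_row (circD2 n) = n" "dim_col (circD2 n) = n"
  unfolding circD2_def by simp_all

lemma transpose_circD2: "transpose_mat (circD2 n) = circD2 n"
  by (rule eq_matI) (auto simp: circD2_def)

lemma cmat_circD2:
  assumes n: "n > 0"
  shows "cmat (circD2 n) = circulant n (\<lambda>k. complex_of_real (Dhat n k))"
proof (rule eq_matI)
  fix i j assume "i < dim_row (circulant n (\<lambda>k. complex_of_real (Dhat n k)))"
    "j < dim_col (circulant n (\<lambda>k. complex_of_real (Dhat n k)))"
  then have i: "i < n" and j: "j < n" by auto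
  let ?t = "int i - int j"
  have "(\<Sum>l<n. complex_of_real (Dhat n l) * unity_root n (int l * ?t))
      = (\<Sum>l<n. unity_root n (int l * (?t + 1))) + (\<Sum>l<n. unity_root n (int l * (?t - 1)))
        - 2 * (\<Sum>l<n. unity_root n (int l * ?t))"
    by (simp add: Dhat_conv_unity_root unity_root_add[symmetric] algebra_simps
        sum.distrib sum_subtractf sum_distrib_left)
  also have "\<dots> = of_nat n * complex_of_real (circD2 n $$ (i, j))"
    using i j unfolding sum_unity_root[OF n] int_dvd_succ_iff[OF i j] int_dvd_pred_iff[OF i j]
      int_dvd_diff_iff_eq[OF j i] circD2_def by simp
  finally show "cmat (circD2 n) $$ (i, j)
      = circulant n (\<lambda>k. complex_of_real (Dhat n k)) $$ (i, j)"
    using i j n by (simp add: circulant_def)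
qed (auto simp: circD2_def)

section \<open>Hermitian forms\<close>

definition cinner :: "complex vec \<Rightarrow> complex vec \<Rightarrow> complex" where
  "cinner v w = (\<Sum>i<dim_vec w. cnj (v $ i) * w $ i)"

definition conj_transpose :: "complex mat \<Rightarrow> complex mat" where
  "conj_transpose M = transpose_mat (map_mat cnj M)"

definition herm_pos_def :: "nat \<Rightarrow> complex mat \<Rightarrow> bool" where
  "herm_pos_def m M \<longleftrightarrow>
     (\<forall>v \<in> carrier_vec m. v \<noteq> 0\<^sub>v m \<longrightarrow> (\<exists>r>0. cinner v (M *\<^sub>v v) = complex_of_real r))"

lemma cinner_add_right: "dim_vec w1 = dim_vec w2 \<Longrightarrow> cinner v (w1 + w2) = cinner v w1 + cinner v w2"
  unfolding cinner_def by (simp add: sum.distrib ring_distribs)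

lemma cinner_smult_left: "dim_vec v = dim_vec w \<Longrightarrow> cinner (c \<cdot>\<^sub>v v) w = cnj c * cinner v w"
  unfolding cinner_def by (simp add: sum_distrib_left ac_simps)

lemma cinner_smult_right: "cinner v (c \<cdot>\<^sub>v w) = c * cinner v w"
  unfolding cinner_def by (simp add: sum_distrib_left ac_simps)

lemma cinner_zero_right [simp]: "cinner v (0\<^sub>v m) = 0"
  unfolding cinner_def by simp

lemma sum_lessThan_add: "sum f {..<(a::nat) + b} = sum f {..<a} + (\<Sum>i<b. f (a + i))"
  by (induct b) (auto simp: add.assoc)

lemma cinner_append:
  assumes "dim_vec a = dim_vec c" "dim_vec b = dim_vec d"
  shows "cinner (a @\<^sub>v b) (c @\<^sub>v d) = cinner a c + cinner b d"
  using assms unfolding cinner_def by (simp add: sum_lessThan_add index_append_vec)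

lemma dim_conj_transpose [simp]:
  "dim_row (conj_transpose M) = dim_col M" "dim_col (conj_transpose M) = dim_row M"
  unfolding conj_transpose_def by simp_all

lemma conj_transpose_carrier [simp]: "M \<in> carrier_mat k m \<Longrightarrow> conj_transpose M \<in> carrier_mat m k"
  unfolding conj_transpose_def by auto

lemma conj_transpose_conj_transpose [simp]: "conj_transpose (conj_transpose M) = M"
  unfolding conj_transpose_def by (rule eq_matI) auto

lemma cinner_mult_mat_vec:
  assumes M: "M \<in> carrier_mat k m" and v: "v \<in> carrier_vec k" and w: "w \<in> carrier_vec m"
  shows "cinner v (M *\<^sub>v w) = cinner (conj_transpose M *\<^sub>v v) w"
proof -
  have "cinner v (M *\<^sub>v w) = (\<Sum>i<k. \<Sum>j<m. cnj (v $ i) * M $$ (i, j) * w $ j)"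
    unfolding cinner_def using M w
    by (auto simp: scalar_prod_def lessThan_atLeast0 sum_distrib_left mult.assoc intro!: sum.cong)
  also have "\<dots> = (\<Sum>j<m. \<Sum>i<k. cnj (v $ i) * M $$ (i, j) * w $ j)"
    by (rule sum.swap)
  also have "\<dots> = cinner (conj_transpose M *\<^sub>v v) w"
    unfolding cinner_def conj_transpose_def using M v w
    by (auto simp: scalar_prod_def lessThan_atLeast0 sum_distrib_left sum_distrib_right ac_simps
        intro!: sum.cong)
  finally show ?thesis .
qed

lemma conj_transpose_cmat:
  "conj_transpose (cmat M) = cmat (transpose_mat M)"
  unfolding conj_transpose_def by (rule eq_matI) auto

lemma conj_transpose_idft: "conj_transpose (idft n) = dft n"
  by (rule eq_matI) (auto simp: conj_transpose_def idft_index dft_index cnj_unity_root mult.commute)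

lemma cinner_cmat_of_real_vec:
  assumes "M \<in> carrier_mat m m" "x \<in> carrier_vec m"
  shows "cinner (map_vec complex_of_real x) (cmat M *\<^sub>v map_vec complex_of_real x)
    = complex_of_real (x \<bullet> (M *\<^sub>v x))"
  unfolding of_real_hom.mult_mat_vec_hom[OF assms, symmetric] cinner_def using assms
  by (simp add: scalar_prod_def lessThan_atLeast0 of_real_sum)

text \<open>The cross terms cancel by the symmetry of \<open>P\<close>.\<close>

lemma cinner_cmat_symmetric:
  assumes P: "P \<in> carrier_mat m m" and sym: "transpose_mat P = P" and v: "v \<in> carrier_vec m"
  shows "cinner v (cmat P *\<^sub>v v) = complex_of_real
    (map_vec Re v \<bullet> (P *\<^sub>v map_vec Re v) + map_vec Im v \<bullet> (P *\<^sub>v map_vec Im v))"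
proof -
  let ?a = "\<lambda>i. Re (v $ i)" and ?b = "\<lambda>i. Im (v $ i)"
  have P_sym: "P $$ (j, i) = P $$ (i, j)" if "i < m" "j < m" for i j
    using arg_cong[OF sym, of "\<lambda>M. M $$ (i, j)"] that P by auto
  have cross: "(\<Sum>i<m. \<Sum>j<m. P $$ (i, j) * (?a i * ?b j - ?b i * ?a j)) = 0"
  proof -
    have "(\<Sum>i<m. \<Sum>j<m. P $$ (i, j) * (?b i * ?a j)) = (\<Sum>j<m. \<Sum>i<m. P $$ (i, j) * (?b i * ?a j))"
      by (rule sum.swap)
    also have "\<dots> = (\<Sum>i<m. \<Sum>j<m. P $$ (i, j) * (?a i * ?b j))"
      by (intro sum.cong refl) (simp add: P_sym mult.commute)
    finally show ?thesis
      by (simp add: right_diff_distrib sum_subtractf)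
  qed
  have "cinner v (cmat P *\<^sub>v v)
      = (\<Sum>i<m. \<Sum>j<m. cnj (v $ i) * (complex_of_real (P $$ (i, j)) * v $ j))"
    unfolding cinner_def using P v
    by (auto simp: scalar_prod_def lessThan_atLeast0 sum_distrib_left intro!: sum.cong)
  also have "\<dots> = (\<Sum>i<m. \<Sum>j<m. complex_of_real (P $$ (i, j) * (?a i * ?a j + ?b i * ?b j))
      + \<i> * complex_of_real (P $$ (i, j) * (?a i * ?b j - ?b i * ?a j)))"
    by (intro sum.cong refl) (simp add: complex_eq_iff algebra_simps)
  also have "\<dots> = complex_of_real (\<Sum>i<m. \<Sum>j<m. P $$ (i, j) * (?a i * ?a j + ?b i * ?b j))
      + \<i> * complex_of_real (\<Sum>i<m. \<Sum>j<m. P $$ (i, j) * (?a i * ?b j - ?b i * ?a j))"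
    by (simp add: sum.distrib sum_distrib_left)
  also have "\<dots> = complex_of_real (\<Sum>i<m. \<Sum>j<m. P $$ (i, j) * (?a i * ?a j + ?b i * ?b j))"
    unfolding cross by simp
  also have "(\<Sum>i<m. \<Sum>j<m. P $$ (i, j) * (?a i * ?a j + ?b i * ?b j))
      = map_vec Re v \<bullet> (P *\<^sub>v map_vec Re v) + map_vec Im v \<bullet> (P *\<^sub>v map_vec Im v)"
    using P v by (simp add: scalar_prod_def lessThan_atLeast0 sum_distrib_left sum.distrib algebra_simps)
  finally show ?thesis .
qed

lemma herm_pos_def_cmat:
  assumes "sym_pos_def m P"
  shows "herm_pos_def m (cmat P)"
  unfolding herm_pos_def_def
proof (intro ballI impI)
  fix v :: "complex vec" assume v: "v \<in> carrier_vec m" and v0: "v \<noteq> 0\<^sub>v m"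
  have P: "P \<in> carrier_mat m m" and sym: "transpose_mat P = P"
    and pd: "\<And>x. x \<in> carrier_vec m \<Longrightarrow> x \<noteq> 0\<^sub>v m \<Longrightarrow> x \<bullet> (P *\<^sub>v x) > 0"
    using assms unfolding sym_pos_def_def by auto
  have nonneg: "x \<bullet> (P *\<^sub>v x) \<ge> 0" if "x \<in> carrier_vec m" for x
    using pd[OF that] P by (cases "x = 0\<^sub>v m") (auto simp: scalar_prod_def)
  let ?a = "map_vec Re v" and ?b = "map_vec Im v"
  have a: "?a \<in> carrier_vec m" and b: "?b \<in> carrier_vec m"
    using v by auto
  have "?a \<noteq> 0\<^sub>v m \<or> ?b \<noteq> 0\<^sub>v m"
  proof (rule ccontr)
    assume "\<not> ?thesis"
    then have "v = 0\<^sub>v m"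
      using v by (auto simp: vec_eq_iff complex_eq_iff)
    then show False
      using v0 by simp
  qed
  then have "?a \<bullet> (P *\<^sub>v ?a) + ?b \<bullet> (P *\<^sub>v ?b) > 0"
    using pd[OF a] pd[OF b] nonneg[OF a] nonneg[OF b] by (auto simp: add_pos_nonneg add_nonneg_pos)
  then show "\<exists>r>0. cinner v (cmat P *\<^sub>v v) = complex_of_real r"
    using cinner_cmat_symmetric[OF P sym v] by blast
qed

lemma herm_pos_def_add_congruence:
  fixes Q G P :: "complex mat"
  assumes Q: "Q \<in> carrier_mat m m" and G: "G \<in> carrier_mat m m" and P: "P \<in> carrier_mat m m"
    and herm: "conj_transpose P = P" and Q_pos: "herm_pos_def m Q"
    and G_nonneg: "\<And>v. v \<in> carrier_vec m \<Longrightarrow> \<exists>r\<ge>0. cinner v (G *\<^sub>v v) = complex_of_real r"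
  shows "herm_pos_def m (Q + P * G * P)"
  unfolding herm_pos_def_def
proof (intro ballI impI)
  fix v :: "complex vec" assume v: "v \<in> carrier_vec m" and v0: "v \<noteq> 0\<^sub>v m"
  have Pv: "P *\<^sub>v v \<in> carrier_vec m" and GPv: "G *\<^sub>v (P *\<^sub>v v) \<in> carrier_vec m"
    using P G v by auto
  have "(Q + P * G * P) *\<^sub>v v = Q *\<^sub>v v + P *\<^sub>v (G *\<^sub>v (P *\<^sub>v v))"
    using Q G P v by (simp add: add_mult_distrib_mat_vec[of _ m m] assoc_mult_mat_vec[of _ m m _ m])
  then have "cinner v ((Q + P * G * P) *\<^sub>v v) = cinner v (Q *\<^sub>v v) + cinner (P *\<^sub>v v) (G *\<^sub>v (P *\<^sub>v v))"
    using cinner_mult_mat_vec[OF P v GPv] herm carrier_matD[OF Q] carrier_matD[OF P]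
    by (simp add: cinner_add_right)
  moreover obtain q where "q > 0" "cinner v (Q *\<^sub>v v) = complex_of_real q"
    using Q_pos v v0 unfolding herm_pos_def_def by blast
  moreover obtain g where "g \<ge> 0" "cinner (P *\<^sub>v v) (G *\<^sub>v (P *\<^sub>v v)) = complex_of_real g"
    using G_nonneg[OF Pv] by blast
  ultimately show "\<exists>r>0. cinner v ((Q + P * G * P) *\<^sub>v v) = complex_of_real r"
    by (intro exI[of _ "q + g"]) simp
qed

lemma cinner_circulant:
  assumes n: "n > 0" and a: "a \<in> carrier_vec n" and b: "b \<in> carrier_vec n"
  shows "cinner a (circulant n f *\<^sub>v b) = (\<Sum>k<n. f k * (cnj ((dft n *\<^sub>v a) $ k) * (dft n *\<^sub>v b) $ k))"
proof -
  have Fb: "dft n *\<^sub>v b \<in> carrier_vec n"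
    using mult_mat_vec_carrier[OF dft_carrier b] .
  have "circulant n f *\<^sub>v b = (idft n * mat_diag n f) *\<^sub>v (dft n *\<^sub>v b)"
    unfolding idft_diag_dft[OF n, symmetric]
    by (rule assoc_mult_mat_vec[OF mult_carrier_mat[OF idft_carrier mat_diag_dim] dft_carrier b])
  also have "\<dots> = idft n *\<^sub>v (mat_diag n f *\<^sub>v (dft n *\<^sub>v b))"
    by (rule assoc_mult_mat_vec[OF idft_carrier mat_diag_dim Fb])
  finally have "cinner a (circulant n f *\<^sub>v b) = cinner (dft n *\<^sub>v a) (mat_diag n f *\<^sub>v (dft n *\<^sub>v b))"
    using cinner_mult_mat_vec[OF idft_carrier a mult_mat_vec_carrier[OF mat_diag_dim Fb]]
    by (simp add: conj_transpose_idft)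
  also have "\<dots> = (\<Sum>k<n. cnj ((dft n *\<^sub>v a) $ k) * (f k * (dft n *\<^sub>v b) $ k))"
    unfolding cinner_def
  proof (rule sum.cong)
    fix k assume "k \<in> {..<n}"
    then show "cnj ((dft n *\<^sub>v a) $ k) * (mat_diag n f *\<^sub>v (dft n *\<^sub>v b)) $ k
        = cnj ((dft n *\<^sub>v a) $ k) * (f k * (dft n *\<^sub>v b) $ k)"
      by (simp only: mat_diag_mult_vec[OF Fb] lessThan_iff)
  qed simp
  finally show ?thesis
    by (simp only: mult.left_commute)
qed

section \<open>Block circulant matrices\<close>

text \<open>\<open>block_circulant n a b c d\<close> acts on the pair of \<open>k\<close>-th Fourier modes of its two halves by
  the real matrix with rows \<open>(a k, b k)\<close> and \<open>(c k, d k)\<close>, so its algebra reduces to \<open>2 \<times> 2\<close>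
  matrix algebra, one mode at a time.\<close>

definition block_circulant ::
    "nat \<Rightarrow> (nat \<Rightarrow> real) \<Rightarrow> (nat \<Rightarrow> real) \<Rightarrow> (nat \<Rightarrow> real) \<Rightarrow> (nat \<Rightarrow> real) \<Rightarrow> complex mat" where
  "block_circulant n a b c d = four_block_mat
     (circulant n (\<lambda>k. complex_of_real (a k))) (circulant n (\<lambda>k. complex_of_real (b k)))
     (circulant n (\<lambda>k. complex_of_real (c k))) (circulant n (\<lambda>k. complex_of_real (d k)))"

lemma block_circulant_carrier [simp]: "block_circulant n a b c d \<in> carrier_mat (n + n) (n + n)"
  unfolding block_circulant_def by (rule four_block_carrier_mat) auto

lemma block_circulant_mult:
  assumes "n > 0"
  shows "block_circulant n a1 b1 c1 d1 * block_circulant n a2 b2 c2 d2 = block_circulant n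
    (\<lambda>k. a1 k * a2 k + b1 k * c2 k) (\<lambda>k. a1 k * b2 k + b1 k * d2 k)
    (\<lambda>k. c1 k * a2 k + d1 k * c2 k) (\<lambda>k. c1 k * b2 k + d1 k * d2 k)"
  unfolding block_circulant_def
  by (subst mult_four_block_mat[OF circulant_carrier circulant_carrier circulant_carrier circulant_carrier
        circulant_carrier circulant_carrier circulant_carrier circulant_carrier])
    (auto simp: circulant_mult[OF assms] circulant_add)

lemma block_circulant_add:
  "block_circulant n a1 b1 c1 d1 + block_circulant n a2 b2 c2 d2 = block_circulant n
    (\<lambda>k. a1 k + a2 k) (\<lambda>k. b1 k + b2 k) (\<lambda>k. c1 k + c2 k) (\<lambda>k. d1 k + d2 k)"
  unfolding block_circulant_def
  by (subst add_four_block_mat[OF circulant_carrier circulant_carrier circulant_carrier circulant_carrier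
        circulant_carrier circulant_carrier circulant_carrier circulant_carrier]) (auto simp: circulant_add)

lemma block_circulant_diff:
  "block_circulant n a1 b1 c1 d1 - block_circulant n a2 b2 c2 d2 = block_circulant n
    (\<lambda>k. a1 k - a2 k) (\<lambda>k. b1 k - b2 k) (\<lambda>k. c1 k - c2 k) (\<lambda>k. d1 k - d2 k)"
proof -
  have "block_circulant n a1 b1 c1 d1 - block_circulant n a2 b2 c2 d2 = block_circulant n a1 b1 c1 d1
      + block_circulant n (\<lambda>k. - a2 k) (\<lambda>k. - b2 k) (\<lambda>k. - c2 k) (\<lambda>k. - d2 k)"
    by (rule eq_matI) (auto simp: block_circulant_def circulant_def sum_negf)
  then show ?thesis
    unfolding block_circulant_add by simp
qed

lemma block_circulant_0: "block_circulant n (\<lambda>k. 0) (\<lambda>k. 0) (\<lambda>k. 0) (\<lambda>k. 0) = 0\<^sub>m (n + n) (n + n)"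
  unfolding block_circulant_def by (rule eq_matI) (auto simp: circulant_def)

lemma block_circulant_cong:
  "(\<And>k. k < n \<Longrightarrow> a k = a' k) \<Longrightarrow> (\<And>k. k < n \<Longrightarrow> b k = b' k) \<Longrightarrow>
   (\<And>k. k < n \<Longrightarrow> c k = c' k) \<Longrightarrow> (\<And>k. k < n \<Longrightarrow> d k = d' k) \<Longrightarrow>
   block_circulant n a b c d = block_circulant n a' b' c' d'"
  unfolding block_circulant_def by (simp cong: circulant_cong)

lemma block_circulant_mult_fourier_mode:
  assumes n: "n > 0" and k: "k < n"
  shows "block_circulant n a b c d *\<^sub>v (\<alpha> \<cdot>\<^sub>v fourier_mode n k @\<^sub>v \<beta> \<cdot>\<^sub>v fourier_mode n k)
    = (complex_of_real (a k) * \<alpha> + complex_of_real (b k) * \<beta>) \<cdot>\<^sub>v fourier_mode n k @\<^sub>v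
      (complex_of_real (c k) * \<alpha> + complex_of_real (d k) * \<beta>) \<cdot>\<^sub>v fourier_mode n k"
proof -
  have mode: "circulant n f *\<^sub>v (\<gamma> \<cdot>\<^sub>v fourier_mode n k) = (f k * \<gamma>) \<cdot>\<^sub>v fourier_mode n k" for f \<gamma>
    using mult_mat_vec[OF circulant_carrier fourier_mode_carrier, of n f \<gamma> k]
    by (simp add: circulant_mult_fourier_mode[OF n k] smult_smult_assoc mult.commute)
  show ?thesis
    unfolding block_circulant_def
    by (subst four_block_mat_mult_vec[OF circulant_carrier circulant_carrier circulant_carrier circulant_carrier
          smult_carrier_vec[THEN iffD2, OF fourier_mode_carrier]
          smult_carrier_vec[THEN iffD2, OF fourier_mode_carrier]])
      (auto simp: mode intro!: eq_vecI simp: algebra_simps)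
qed

text \<open>On the \<open>k\<close>-th modes, \<open>block_circulant n 0 1 (-y) (-z)\<close> is the companion matrix of
  \<open>s\<^sup>2 + z\<^sub>k s + y\<^sub>k\<close>, which it therefore annihilates (Cayley--Hamilton).\<close>

lemma block_circulant_companion:
  fixes y z :: "nat \<Rightarrow> real" and \<alpha> \<beta> :: complex
  assumes n: "n > 0" and k: "k < n"
  defines "C \<equiv> block_circulant n (\<lambda>k. 0) (\<lambda>k. 1) (\<lambda>k. - y k) (\<lambda>k. - z k)"
    and "w \<equiv> \<alpha> \<cdot>\<^sub>v fourier_mode n k @\<^sub>v \<beta> \<cdot>\<^sub>v fourier_mode n k"
  shows "C *\<^sub>v (C *\<^sub>v w) + complex_of_real (z k) \<cdot>\<^sub>v (C *\<^sub>v w) + complex_of_real (y k) \<cdot>\<^sub>v w = 0\<^sub>v (n + n)"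
  unfolding C_def w_def block_circulant_mult_fourier_mode[OF n k]
  by (rule eq_vecI) (auto simp: algebra_simps)

lemma mat_eq_0_on_fourier_modes:
  assumes n: "n > 0" and X: "X \<in> carrier_mat (n + n) (n + n)"
    and first: "\<And>k. k < n \<Longrightarrow> X *\<^sub>v (fourier_mode n k @\<^sub>v 0\<^sub>v n) = 0\<^sub>v (n + n)"
    and second: "\<And>k. k < n \<Longrightarrow> X *\<^sub>v (0\<^sub>v n @\<^sub>v fourier_mode n k) = 0\<^sub>v (n + n)"
  shows "X = 0\<^sub>m (n + n) (n + n)"
proof -
  let ?c = "complex_of_real (1 / sqrt (real n))"
  let ?W = "four_block_mat (idft n) (0\<^sub>m n n) (0\<^sub>m n n) (idft n)"
  let ?F = "four_block_mat (dft n) (0\<^sub>m n n) (0\<^sub>m n n) (dft n)"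
  have W: "?W \<in> carrier_mat (n + n) (n + n)" and F: "?F \<in> carrier_mat (n + n) (n + n)"
    by auto
  have WF: "?W * ?F = 1\<^sub>m (n + n)"
    by (subst mult_four_block_mat[OF idft_carrier zero_carrier_mat zero_carrier_mat idft_carrier
        dft_carrier zero_carrier_mat zero_carrier_mat dft_carrier]) (simp add: idft_mult_dft[OF n])
  have col: "X *\<^sub>v col ?W j = 0\<^sub>v (n + n)" if "j < n + n" for j
  proof (cases "j < n")
    case True
    then have "col ?W j = ?c \<cdot>\<^sub>v (fourier_mode n j @\<^sub>v 0\<^sub>v n)"
      by (intro eq_vecI) (auto simp: col_four_block_mat idft_index fourier_mode_def mult.commute)
    then show ?thesis
      using mult_mat_vec[OF X, of "fourier_mode n j @\<^sub>v 0\<^sub>v n" ?c] first[OF True] by simp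
  next
    case False
    then have j: "j - n < n"
      using that by simp
    have "col ?W j = ?c \<cdot>\<^sub>v (0\<^sub>v n @\<^sub>v fourier_mode n (j - n))"
      using False that
      by (intro eq_vecI) (auto simp: col_four_block_mat idft_index fourier_mode_def mult.commute)
    then show ?thesis
      using mult_mat_vec[OF X, of "0\<^sub>v n @\<^sub>v fourier_mode n (j - n)" ?c] second[OF j] by simp
  qed
  have XW: "X * ?W = 0\<^sub>m (n + n) (n + n)"
  proof (rule eq_matI)
    fix i j assume "i < dim_row (0\<^sub>m (n + n) (n + n) :: complex mat)"
      "j < dim_col (0\<^sub>m (n + n) (n + n) :: complex mat)"
    moreover have "(X * ?W) $$ (i, j) = (X *\<^sub>v col ?W j) $ i"
      using calculation X by simp
    ultimately show "(X * ?W) $$ (i, j) = 0\<^sub>m (n + n) (n + n) $$ (i, j)"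
      using col by simp
  qed (use X in auto)
  have "X = X * (?W * ?F)"
    unfolding WF using X by simp
  also have "\<dots> = 0\<^sub>m (n + n) (n + n)"
    unfolding assoc_mult_mat[OF X W F, symmetric] XW using F by simp
  finally show ?thesis .
qed

lemma quadratic_form_nonneg:
  fixes p q r a b :: real
  assumes "p \<ge> 0" "r \<ge> 0" "q^2 \<le> p * r"
  shows "p * a^2 + 2 * q * (a * b) + r * b^2 \<ge> 0"
proof (cases "r = 0")
  case True
  then have "q = 0"
    using assms by simp
  then show ?thesis
    using True assms by simp
next
  case False
  have "r * (p * a^2 + 2 * q * (a * b) + r * b^2) = (r * b + q * a)^2 + (p * r - q^2) * a^2"
    by (simp add: algebra_simps power2_eq_square)
  also have "\<dots> \<ge> 0"
    using assms by simp
  finally show ?thesis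
    using False assms by (simp add: zero_le_mult_iff)
qed

lemma quadratic_form_pos:
  fixes p q r a b :: real
  assumes "r > 0" "q^2 < p * r" "a \<noteq> 0 \<or> b \<noteq> 0"
  shows "p * a^2 + 2 * q * (a * b) + r * b^2 > 0"
proof -
  have "r * (p * a^2 + 2 * q * (a * b) + r * b^2) = (r * b + q * a)^2 + (p * r - q^2) * a^2"
    by (simp add: algebra_simps power2_eq_square)
  also have "\<dots> > 0"
  proof (cases "a = 0")
    case False
    then have "(p * r - q^2) * a^2 > 0"
      using assms by simp
    then show ?thesis
      by (simp add: add_nonneg_pos)
  qed (use assms in simp)
  finally show ?thesis
    using assms by (simp add: zero_less_mult_iff)
qed

definition sym2_form :: "real \<Rightarrow> real \<Rightarrow> real \<Rightarrow> complex \<Rightarrow> complex \<Rightarrow> real" where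
  "sym2_form p q r A B = p * ((Re A)^2 + (Im A)^2) + 2 * q * (Re A * Re B + Im A * Im B)
     + r * ((Re B)^2 + (Im B)^2)"

lemma of_real_sym2_form:
  "complex_of_real (sym2_form p q r A B) = complex_of_real p * (cnj A * A)
     + complex_of_real q * (cnj A * B) + complex_of_real q * (cnj B * A) + complex_of_real r * (cnj B * B)"
  unfolding sym2_form_def by (simp add: complex_eq_iff algebra_simps power2_eq_square)

lemma sym2_form_nonneg: "p \<ge> 0 \<Longrightarrow> r \<ge> 0 \<Longrightarrow> q^2 \<le> p * r \<Longrightarrow> sym2_form p q r A B \<ge> 0"
  using quadratic_form_nonneg[of p r q "Re A" "Re B"] quadratic_form_nonneg[of p r q "Im A" "Im B"]
  unfolding sym2_form_def by (simp add: algebra_simps)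

lemma sym2_form_pos:
  assumes "p > 0" "r > 0" "q^2 < p * r" "A \<noteq> 0 \<or> B \<noteq> 0"
  shows "sym2_form p q r A B > 0"
proof -
  have re: "p * (Re A)^2 + 2 * q * (Re A * Re B) + r * (Re B)^2 \<ge> 0"
    and im: "p * (Im A)^2 + 2 * q * (Im A * Im B) + r * (Im B)^2 \<ge> 0"
    using assms by (auto intro: quadratic_form_nonneg)
  consider "Re A \<noteq> 0 \<or> Re B \<noteq> 0" | "Im A \<noteq> 0 \<or> Im B \<noteq> 0"
    using assms(4) by (auto simp: complex_eq_iff)
  then show ?thesis
  proof cases
    case 1
    then show ?thesis
      using quadratic_form_pos[OF assms(2,3) 1] im unfolding sym2_form_def by (simp add: algebra_simps)
  next
    case 2
    then show ?thesis
      using quadratic_form_pos[OF assms(2,3) 2] re unfolding sym2_form_def by (simp add: algebra_simps)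
  qed
qed

lemma cinner_block_circulant:
  assumes n: "n > 0" and a: "a \<in> carrier_vec n" and b: "b \<in> carrier_vec n"
  shows "cinner (a @\<^sub>v b) (block_circulant n \<alpha> \<beta> \<beta> \<delta> *\<^sub>v (a @\<^sub>v b)) = complex_of_real
    (\<Sum>k<n. sym2_form (\<alpha> k) (\<beta> k) (\<delta> k) ((dft n *\<^sub>v a) $ k) ((dft n *\<^sub>v b) $ k))"
proof -
  let ?C = "\<lambda>f. circulant n (\<lambda>k. complex_of_real (f k))"
  have "block_circulant n \<alpha> \<beta> \<beta> \<delta> *\<^sub>v (a @\<^sub>v b)
      = (?C \<alpha> *\<^sub>v a + ?C \<beta> *\<^sub>v b) @\<^sub>v (?C \<beta> *\<^sub>v a + ?C \<delta> *\<^sub>v b)"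
    unfolding block_circulant_def by (rule four_block_mat_mult_vec) (use a b in auto)
  then have "cinner (a @\<^sub>v b) (block_circulant n \<alpha> \<beta> \<beta> \<delta> *\<^sub>v (a @\<^sub>v b))
      = cinner a (?C \<alpha> *\<^sub>v a) + cinner a (?C \<beta> *\<^sub>v b) + (cinner b (?C \<beta> *\<^sub>v a) + cinner b (?C \<delta> *\<^sub>v b))"
    using a b by (simp add: cinner_append cinner_add_right)
  also have "\<dots> = (\<Sum>k<n. complex_of_real
      (sym2_form (\<alpha> k) (\<beta> k) (\<delta> k) ((dft n *\<^sub>v a) $ k) ((dft n *\<^sub>v b) $ k)))"
    unfolding cinner_circulant[OF n a a] cinner_circulant[OF n a b] cinner_circulant[OF n b a]
      cinner_circulant[OF n b b] of_real_sym2_form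
    by (simp only: sum.distrib add.assoc)
  finally show ?thesis
    by simp
qed

lemma cinner_block_circulant_nonneg:
  assumes n: "n > 0" and v: "v \<in> carrier_vec (n + n)"
    and "\<And>k. k < n \<Longrightarrow> \<alpha> k \<ge> 0 \<and> \<delta> k \<ge> 0 \<and> (\<beta> k)^2 \<le> \<alpha> k * \<delta> k"
  shows "\<exists>r\<ge>0. cinner v (block_circulant n \<alpha> \<beta> \<beta> \<delta> *\<^sub>v v) = complex_of_real r"
proof -
  define a b where "a = vec_first v n" and "b = vec_last v n"
  have a: "a \<in> carrier_vec n" and b: "b \<in> carrier_vec n" and v_ab: "v = a @\<^sub>v b"
    unfolding a_def b_def using vec_first_last_append[OF v] by auto
  have "(\<Sum>k<n. sym2_form (\<alpha> k) (\<beta> k) (\<delta> k) ((dft n *\<^sub>v a) $ k) ((dft n *\<^sub>v b) $ k)) \<ge> 0"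
    using assms(3) by (intro sum_nonneg sym2_form_nonneg) auto
  then show ?thesis
    unfolding v_ab cinner_block_circulant[OF n a b] by blast
qed

lemma herm_pos_def_block_circulant:
  assumes n: "n > 0"
    and pos: "\<And>k. k < n \<Longrightarrow> \<alpha> k > 0 \<and> \<delta> k > 0 \<and> (\<beta> k)^2 < \<alpha> k * \<delta> k"
  shows "herm_pos_def (n + n) (block_circulant n \<alpha> \<beta> \<beta> \<delta>)"
  unfolding herm_pos_def_def
proof (intro ballI impI)
  fix v :: "complex vec" assume v: "v \<in> carrier_vec (n + n)" and v0: "v \<noteq> 0\<^sub>v (n + n)"
  define a b where "a = vec_first v n" and "b = vec_last v n"
  have a: "a \<in> carrier_vec n" and b: "b \<in> carrier_vec n" and v_ab: "v = a @\<^sub>v b"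
    unfolding a_def b_def using vec_first_last_append[OF v] by auto
  have "a \<noteq> 0\<^sub>v n \<or> b \<noteq> 0\<^sub>v n"
  proof (rule ccontr)
    assume "\<not> ?thesis"
    then have "v = 0\<^sub>v n @\<^sub>v 0\<^sub>v n"
      using v_ab by simp
    also have "\<dots> = 0\<^sub>v (n + n)"
      by (rule eq_vecI) auto
    finally show False
      using v0 by simp
  qed
  then have "dft n *\<^sub>v a \<noteq> 0\<^sub>v n \<or> dft n *\<^sub>v b \<noteq> 0\<^sub>v n"
    using dft_mult_vec_eq_0[OF n] a b by blast
  then obtain k where k: "k < n" and "(dft n *\<^sub>v a) $ k \<noteq> 0 \<or> (dft n *\<^sub>v b) $ k \<noteq> 0"
    by (auto simp: vec_eq_iff)
  let ?g = "\<lambda>k. sym2_form (\<alpha> k) (\<beta> k) (\<delta> k) ((dft n *\<^sub>v a) $ k) ((dft n *\<^sub>v b) $ k)"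
  have "0 < ?g k"
    using pos[OF k] \<open>(dft n *\<^sub>v a) $ k \<noteq> 0 \<or> (dft n *\<^sub>v b) $ k \<noteq> 0\<close> by (intro sym2_form_pos) auto
  also have "\<dots> \<le> (\<Sum>k<n. ?g k)"
    using k pos by (intro member_le_sum sym2_form_nonneg) (auto simp: less_imp_le)
  finally show "\<exists>r>0. cinner v (block_circulant n \<alpha> \<beta> \<beta> \<delta> *\<^sub>v v) = complex_of_real r"
    unfolding v_ab cinner_block_circulant[OF n a b] by blast
qed

section \<open>Algebraic Riccati equations\<close>

lemma riccati_difference:
  fixes P P' A A' G Q :: "'a :: comm_ring mat"
  assumes c: "P \<in> carrier_mat m m" "P' \<in> carrier_mat m m" "A \<in> carrier_mat m m"
    "A' \<in> carrier_mat m m" "G \<in> carrier_mat m m" "Q \<in> carrier_mat m m"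
    and R: "P * A + A' * P - P * G * P + Q = 0\<^sub>m m m"
    and R': "P' * A + A' * P' - P' * G * P' + Q = 0\<^sub>m m m"
  shows "(P - P') * (A - G * P') + (A' - P * G) * (P - P') = 0\<^sub>m m m"
proof -
  have GP': "G * P' \<in> carrier_mat m m" and PG: "P * G \<in> carrier_mat m m"
    using c by auto
  have assoc: "P * (G * P') = P * G * P'" "P' * (G * P') = P' * G * P'"
    using c by (auto simp: assoc_mult_mat[of _ m m _ m _ m])
  have PP': "P - P' \<in> carrier_mat m m" and A'PG: "A' - P * G \<in> carrier_mat m m"
    using c by auto
  have e1: "(P - P') * (A - G * P') = (P * A - P' * A) - (P * G * P' - P' * G * P')"
    unfolding assoc[symmetric] mult_minus_distrib_mat[OF PP' c(3) GP']
      minus_mult_distrib_mat[OF c(1,2,3)] minus_mult_distrib_mat[OF c(1,2) GP'] ..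
  have e2: "(A' - P * G) * (P - P') = (A' * P - P * G * P) - (A' * P' - P * G * P')"
    unfolding mult_minus_distrib_mat[OF A'PG c(1,2)]
      minus_mult_distrib_mat[OF c(4) PG c(1)] minus_mult_distrib_mat[OF c(4) PG c(2)] ..
  show ?thesis
    unfolding e1 e2
  proof (rule eq_matI)
    fix i j assume "i < dim_row (0\<^sub>m m m :: 'a mat)" "j < dim_col (0\<^sub>m m m :: 'a mat)"
    then have i: "i < m" and j: "j < m"
      by auto
    have "(P * A - P' * A - (P * G * P' - P' * G * P') + (A' * P - P * G * P - (A' * P' - P * G * P')))
        $$ (i, j) = ((P * A) $$ (i, j) + (A' * P) $$ (i, j) - (P * G * P) $$ (i, j) + Q $$ (i, j))
          - ((P' * A) $$ (i, j) + (A' * P') $$ (i, j) - (P' * G * P') $$ (i, j) + Q $$ (i, j))"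
      using c i j by simp
    also have "\<dots> = 0"
      using arg_cong[OF R, of "\<lambda>M. M $$ (i, j)"] arg_cong[OF R', of "\<lambda>M. M $$ (i, j)"] c i j
      by simp
    finally show "(P * A - P' * A - (P * G * P' - P' * G * P')
        + (A' * P - P * G * P - (A' * P' - P * G * P'))) $$ (i, j) = 0\<^sub>m m m $$ (i, j)"
      using i j by simp
  qed (use c in auto)
qed

lemma riccati_closed_loop_lyapunov:
  fixes P A A' G Q :: "'a :: comm_ring mat"
  assumes c: "P \<in> carrier_mat m m" "A \<in> carrier_mat m m" "A' \<in> carrier_mat m m"
    "G \<in> carrier_mat m m" "Q \<in> carrier_mat m m"
    and R: "P * A + A' * P - P * G * P + Q = 0\<^sub>m m m"
  shows "(A' - P * G) * P + P * (A - G * P) + (Q + P * G * P) = 0\<^sub>m m m"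
proof -
  have GP: "G * P \<in> carrier_mat m m" and PG: "P * G \<in> carrier_mat m m"
    using c by auto
  have "P * (G * P) = P * G * P"
    using c by (auto simp: assoc_mult_mat[of _ m m _ m _ m])
  then have e1: "(A' - P * G) * P = A' * P - P * G * P"
    and e2: "P * (A - G * P) = P * A - P * G * P"
    using minus_mult_distrib_mat[OF c(3) PG c(1)] mult_minus_distrib_mat[OF c(1,2) GP] by simp_all
  show ?thesis
    unfolding e1 e2
  proof (rule eq_matI)
    fix i j assume "i < dim_row (0\<^sub>m m m :: 'a mat)" "j < dim_col (0\<^sub>m m m :: 'a mat)"
    then have i: "i < m" and j: "j < m"
      by auto
    have "(A' * P - P * G * P + (P * A - P * G * P) + (Q + P * G * P)) $$ (i, j)
        = (P * A) $$ (i, j) + (A' * P) $$ (i, j) - (P * G * P) $$ (i, j) + Q $$ (i, j)"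
      using c i j by simp
    also have "\<dots> = 0"
      using arg_cong[OF R, of "\<lambda>M. M $$ (i, j)"] c i j by simp
    finally show "(A' * P - P * G * P + (P * A - P * G * P) + (Q + P * G * P)) $$ (i, j)
        = 0\<^sub>m m m $$ (i, j)"
      using i j by simp
  qed (use c in auto)
qed

text \<open>For an eigenvector \<open>v\<close> of \<open>A\<close> with eigenvalue \<open>\<mu>\<close>, the Lyapunov equation gives
  \<open>2 Re \<mu> \<langle>v, P v\<rangle> + \<langle>v, Q v\<rangle> = 0\<close>.\<close>

lemma lyapunov_eigenvalue_Re_neg:
  fixes A P Q :: "complex mat"
  assumes A: "A \<in> carrier_mat m m" and P: "P \<in> carrier_mat m m" and Q: "Q \<in> carrier_mat m m"
    and herm: "conj_transpose P = P" and P_pos: "herm_pos_def m P" and Q_pos: "herm_pos_def m Q"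
    and lyap: "conj_transpose A * P + P * A + Q = 0\<^sub>m m m"
    and ev: "eigenvalue A \<mu>"
  shows "Re \<mu> < 0"
proof -
  obtain v where v: "v \<in> carrier_vec m" "v \<noteq> 0\<^sub>v m" and Av: "A *\<^sub>v v = \<mu> \<cdot>\<^sub>v v"
    using ev A unfolding eigenvalue_def eigenvector_def by auto
  obtain p where p: "p > 0" "cinner v (P *\<^sub>v v) = complex_of_real p"
    using P_pos v unfolding herm_pos_def_def by blast
  obtain q where q: "q > 0" "cinner v (Q *\<^sub>v v) = complex_of_real q"
    using Q_pos v unfolding herm_pos_def_def by blast
  have Pv: "P *\<^sub>v v \<in> carrier_vec m"
    using P v by auto
  have "cinner v (conj_transpose A *\<^sub>v (P *\<^sub>v v)) = cinner (A *\<^sub>v v) (P *\<^sub>v v)"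
    using cinner_mult_mat_vec[OF conj_transpose_carrier[OF A] v(1) Pv] by simp
  also have "\<dots> = cnj \<mu> * complex_of_real p"
    unfolding Av using v P p by (simp add: cinner_smult_left)
  finally have t1: "cinner v (conj_transpose A *\<^sub>v (P *\<^sub>v v)) = cnj \<mu> * complex_of_real p" .
  have "P *\<^sub>v (A *\<^sub>v v) = \<mu> \<cdot>\<^sub>v (P *\<^sub>v v)"
    unfolding Av using P v by (simp add: mult_mat_vec)
  then have t2: "cinner v (P *\<^sub>v (A *\<^sub>v v)) = \<mu> * complex_of_real p"
    using p by (simp add: cinner_smult_right)
  have AH: "conj_transpose A \<in> carrier_mat m m"
    using A by simp
  have "0\<^sub>v m = (conj_transpose A * P + P * A + Q) *\<^sub>v v"
    unfolding lyap using v(1) by simp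
  also have "\<dots> = (conj_transpose A * P) *\<^sub>v v + (P * A) *\<^sub>v v + Q *\<^sub>v v"
    using add_mult_distrib_mat_vec[OF add_carrier_mat[OF mult_carrier_mat[OF P A]] Q v(1)]
      add_mult_distrib_mat_vec[OF mult_carrier_mat[OF AH P] mult_carrier_mat[OF P A] v(1)]
    by simp
  also have "\<dots> = conj_transpose A *\<^sub>v (P *\<^sub>v v) + P *\<^sub>v (A *\<^sub>v v) + Q *\<^sub>v v"
    using assoc_mult_mat_vec[OF AH P v(1)] assoc_mult_mat_vec[OF P A v(1)] by simp
  finally have "0 = cinner v (conj_transpose A *\<^sub>v (P *\<^sub>v v) + P *\<^sub>v (A *\<^sub>v v) + Q *\<^sub>v v)"
    by (metis cinner_zero_right)
  also have "\<dots> = complex_of_real (2 * Re \<mu> * p + q)"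
    using A P Q v by (simp add: cinner_add_right t1 t2 q complex_eq_iff)
  finally have "2 * Re \<mu> * p + q = 0"
    by (metis of_real_eq_0_iff)
  then have "Re \<mu> * p < 0"
    using q(1) by linarith
  then show ?thesis
    using p(1) by (simp add: mult_less_0_iff)
qed

lemma quadratic_roots_Re_pos:
  fixes z y :: real
  assumes z: "z > 0" and y: "y > 0"
  obtains r1 r2 where "r1 + r2 = complex_of_real z" "r1 * r2 = complex_of_real y"
    "Re r1 > 0" "Re r2 > 0"
proof -
  define w where "w = csqrt (complex_of_real (z^2 - 4 * y))"
  have w2: "w^2 = complex_of_real (z^2 - 4 * y)"
    unfolding w_def by simp
  have "\<bar>Re w\<bar> < z"
  proof (cases "Im w = 0")
    case True
    then have "(Re w)^2 = z^2 - 4 * y"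
      using arg_cong[OF w2, of Re] by (simp add: Re_power2)
    then have "\<bar>Re w\<bar>^2 < z^2"
      using y by simp
    then show ?thesis
      using power2_less_imp_less z by fastforce
  next
    case False
    then have "Re w = 0"
      using arg_cong[OF w2, of Im] by (simp add: Im_power2)
    then show ?thesis
      using z by simp
  qed
  moreover have "(complex_of_real z + w) / 2 * ((complex_of_real z - w) / 2) = complex_of_real y"
    using w2 by (simp add: field_simps power2_eq_square)
  ultimately show ?thesis
    by (intro that[of "(complex_of_real z + w) / 2" "(complex_of_real z - w) / 2"]) (auto simp: field_simps)
qed

lemma mult_mat_vec_quadratic_factor:
  fixes T :: "'a :: comm_ring mat"
  assumes T: "T \<in> carrier_mat m m" and u: "u \<in> carrier_vec m"
  shows "T *\<^sub>v (T *\<^sub>v u - b \<cdot>\<^sub>v u) - a \<cdot>\<^sub>v (T *\<^sub>v u - b \<cdot>\<^sub>v u)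
    = T *\<^sub>v (T *\<^sub>v u) - (a + b) \<cdot>\<^sub>v (T *\<^sub>v u) + (a * b) \<cdot>\<^sub>v u"
proof -
  have "T *\<^sub>v (T *\<^sub>v u - b \<cdot>\<^sub>v u) = T *\<^sub>v (T *\<^sub>v u) - b \<cdot>\<^sub>v (T *\<^sub>v u)"
    using T u by (subst mult_minus_distrib_mat_vec[OF T]) (auto simp: mult_mat_vec)
  then show ?thesis
    using T u by (intro eq_vecI) (auto simp: algebra_simps)
qed

text \<open>The roots \<open>r\<^sub>1, r\<^sub>2\<close> of \<open>s\<^sup>2 - z s + y\<close> have positive real part, so neither factor of
  \<open>(T - r\<^sub>1) (T - r\<^sub>2) u = 0\<close> can vanish nontrivially for a Hurwitz \<open>T\<close>.\<close>

lemma hurwitz_quadratic_kernel: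
  fixes T :: "complex mat"
  assumes T: "T \<in> carrier_mat m m" and hurwitz: "\<And>\<rho>. eigenvalue T \<rho> \<Longrightarrow> Re \<rho> < 0"
    and "z > 0" "y > 0" and u: "u \<in> carrier_vec m"
    and H: "T *\<^sub>v (T *\<^sub>v u) - complex_of_real z \<cdot>\<^sub>v (T *\<^sub>v u) + complex_of_real y \<cdot>\<^sub>v u = 0\<^sub>v m"
  shows "u = 0\<^sub>v m"
proof -
  obtain r1 r2 where r: "r1 + r2 = complex_of_real z" "r1 * r2 = complex_of_real y"
    "Re r1 > 0" "Re r2 > 0"
    using quadratic_roots_Re_pos[OF \<open>z > 0\<close> \<open>y > 0\<close>] by blast
  have no_eigenvector: "w = 0\<^sub>v m" if "w \<in> carrier_vec m" "T *\<^sub>v w = r \<cdot>\<^sub>v w" "Re r > 0" for w r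
    using hurwitz[of r] that T unfolding eigenvalue_def eigenvector_def by force
  define u' where "u' = T *\<^sub>v u - r2 \<cdot>\<^sub>v u"
  have u': "u' \<in> carrier_vec m"
    unfolding u'_def using T u by auto
  have "T *\<^sub>v u' - r1 \<cdot>\<^sub>v u' = 0\<^sub>v m"
    unfolding u'_def mult_mat_vec_quadratic_factor[OF T u] r(1,2) by (rule H)
  then have "T *\<^sub>v u' = r1 \<cdot>\<^sub>v u'"
    using T u' by (auto simp: vec_eq_iff)
  then have "u' = 0\<^sub>v m"
    using no_eigenvector[OF u'] r(3) by blast
  then have "T *\<^sub>v u = r2 \<cdot>\<^sub>v u"
    using T u unfolding u'_def by (auto simp: vec_eq_iff)
  then show ?thesis
    using no_eigenvector[OF u] r(4) by blast
qed

text \<open>If \<open>X A + T X = 0\<close> then \<open>X p(A) = p(-T) X\<close> for every polynomial \<open>p\<close>; with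
  \<open>p(s) = s\<^sup>2 + z s + y\<close> and \<open>p(A) w = 0\<close> this puts \<open>X w\<close> in the kernel treated above.\<close>

lemma sylvester_kernel:
  fixes X T A :: "complex mat"
  assumes X: "X \<in> carrier_mat m m" and T: "T \<in> carrier_mat m m" and A: "A \<in> carrier_mat m m"
    and sylvester: "X * A + T * X = 0\<^sub>m m m"
    and hurwitz: "\<And>\<rho>. eigenvalue T \<rho> \<Longrightarrow> Re \<rho> < 0"
    and "z > 0" "y > 0" and w: "w \<in> carrier_vec m"
    and p_w: "A *\<^sub>v (A *\<^sub>v w) + complex_of_real z \<cdot>\<^sub>v (A *\<^sub>v w) + complex_of_real y \<cdot>\<^sub>v w = 0\<^sub>v m"
  shows "X *\<^sub>v w = 0\<^sub>v m"
proof -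
  have intertwine: "X *\<^sub>v (A *\<^sub>v x) + T *\<^sub>v (X *\<^sub>v x) = 0\<^sub>v m" if x: "x \<in> carrier_vec m" for x
  proof -
    have "X *\<^sub>v (A *\<^sub>v x) + T *\<^sub>v (X *\<^sub>v x) = (X * A + T * X) *\<^sub>v x"
      using X T A x by (simp add: add_mult_distrib_mat_vec[of _ m m] assoc_mult_mat_vec[of _ m m _ m])
    then show ?thesis
      unfolding sylvester using x by simp
  qed
  define w1 where "w1 = A *\<^sub>v w"
  define u where "u = X *\<^sub>v w"
  define u1 where "u1 = X *\<^sub>v w1"
  define u2 where "u2 = X *\<^sub>v (A *\<^sub>v w1)"
  have w1: "w1 \<in> carrier_vec m"
    unfolding w1_def using A w by auto
  have u: "u \<in> carrier_vec m" "u1 \<in> carrier_vec m" "u2 \<in> carrier_vec m"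
    unfolding u_def u1_def u2_def using X A w w1 by auto
  have Tu: "T *\<^sub>v u = (-1) \<cdot>\<^sub>v u1"
  proof -
    have "u1 + T *\<^sub>v u = 0\<^sub>v m"
      using intertwine[OF w] unfolding u1_def u_def w1_def .
    then show ?thesis
      using u T by (auto simp: vec_eq_iff algebra_simps add_eq_0_iff)
  qed
  have Tu1: "T *\<^sub>v u1 = (-1) \<cdot>\<^sub>v u2"
  proof -
    have "u2 + T *\<^sub>v u1 = 0\<^sub>v m"
      using intertwine[OF w1] unfolding u1_def u2_def .
    then show ?thesis
      using u T by (auto simp: vec_eq_iff algebra_simps add_eq_0_iff)
  qed
  have TTu: "T *\<^sub>v (T *\<^sub>v u) = u2"
    unfolding Tu mult_mat_vec[OF T u(2)] Tu1 using u by (auto simp: vec_eq_iff)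
  have "X *\<^sub>v (A *\<^sub>v w1 + complex_of_real z \<cdot>\<^sub>v w1 + complex_of_real y \<cdot>\<^sub>v w)
      = u2 + complex_of_real z \<cdot>\<^sub>v u1 + complex_of_real y \<cdot>\<^sub>v u"
    unfolding u2_def u1_def u_def using X A w w1
    by (simp add: mult_add_distrib_mat_vec[of _ m m] mult_mat_vec[of _ m m])
  moreover have "X *\<^sub>v 0\<^sub>v m = 0\<^sub>v m"
    using X by (intro eq_vecI) (auto simp: scalar_prod_def)
  ultimately have "u2 + complex_of_real z \<cdot>\<^sub>v u1 + complex_of_real y \<cdot>\<^sub>v u = 0\<^sub>v m"
    using p_w unfolding w1_def by simp
  then have "T *\<^sub>v (T *\<^sub>v u) - complex_of_real z \<cdot>\<^sub>v (T *\<^sub>v u) + complex_of_real y \<cdot>\<^sub>v u = 0\<^sub>v m"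
    unfolding TTu unfolding Tu using u by (auto simp: vec_eq_iff add.assoc)
  then have "u = 0\<^sub>v m"
    using hurwitz_quadratic_kernel[OF T _ \<open>z > 0\<close> \<open>y > 0\<close> u(1)] hurwitz by blast
  then show ?thesis
    unfolding u_def .
qed

section \<open>The LQR problem in Fourier coordinates\<close>

lemma cmat_add: "A \<in> carrier_mat nr nc \<Longrightarrow> B \<in> carrier_mat nr nc \<Longrightarrow> cmat (A + B) = cmat A + cmat B"
  by (rule eq_matI) auto

lemma cmat_diff: "A \<in> carrier_mat nr nc \<Longrightarrow> B \<in> carrier_mat nr nc \<Longrightarrow> cmat (A - B) = cmat A - cmat B"
  by (rule eq_matI) auto

lemma cmat_smult: "cmat (c \<cdot>\<^sub>m A) = complex_of_real c \<cdot>\<^sub>m cmat A"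
  by (rule eq_matI) auto

lemma cmat_zero [simp]: "cmat (0\<^sub>m nr nc) = 0\<^sub>m nr nc"
  by (rule eq_matI) auto

lemma cmat_riccati:
  assumes P: "P \<in> carrier_mat m m" and A: "A \<in> carrier_mat m m" and A': "A' \<in> carrier_mat m m"
    and G: "G \<in> carrier_mat m m" and Q: "Q \<in> carrier_mat m m"
  shows "cmat (P * A + A' * P - P * G * P + Q)
    = cmat P * cmat A + cmat A' * cmat P - cmat P * cmat G * cmat P + cmat Q"
proof -
  have PA: "P * A \<in> carrier_mat m m" and A'P: "A' * P \<in> carrier_mat m m"
    and PG: "P * G \<in> carrier_mat m m" and PGP: "P * G * P \<in> carrier_mat m m"
    using assms by auto
  have sum: "P * A + A' * P \<in> carrier_mat m m" "P * A + A' * P - P * G * P \<in> carrier_mat m m"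
    using add_carrier_mat[OF A'P] minus_carrier_mat[OF PGP] by auto
  have "cmat (P * A + A' * P - P * G * P + Q) = cmat (P * A + A' * P) - cmat (P * G * P) + cmat Q"
    using cmat_add[OF sum(2) Q] cmat_diff[OF sum(1) PGP] by simp
  also have "\<dots> = cmat P * cmat A + cmat A' * cmat P - cmat P * cmat G * cmat P + cmat Q"
    unfolding cmat_add[OF PA A'P] of_real_hom.mat_hom_mult[OF P A] of_real_hom.mat_hom_mult[OF A' P]
      of_real_hom.mat_hom_mult[OF PG P] of_real_hom.mat_hom_mult[OF P G] ..
  finally show ?thesis .
qed

lemma Rinv_eq: "Pi3 \<noteq> 0 \<Longrightarrow> Rinv n Pi3 = Pi3^2 \<cdot>\<^sub>m 1\<^sub>m n"
  unfolding Rinv_def weightR_def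
  by (rule the_mat_inverse_eqI) (auto simp: mult_smult_distrib mult_smult_assoc_mat)

lemma sysA_carrier [simp]: "sysA n \<in> carrier_mat (n + n) (n + n)"
  and sysB_carrier [simp]: "sysB n \<in> carrier_mat (n + n) n"
  and weightQ_carrier [simp]: "weightQ n Pi1 Pi2 \<in> carrier_mat (n + n) (n + n)"
  unfolding sysA_def sysB_def weightQ_def
  using four_block_carrier_mat[of "0\<^sub>m n n" n n "0\<^sub>m n 0" n 0] by auto

lemma transpose_sysB: "transpose_mat (sysB n) = four_block_mat (0\<^sub>m n n) (1\<^sub>m n) (0\<^sub>m 0 n) (0\<^sub>m 0 n)"
  unfolding sysB_def by (subst transpose_four_block_mat) auto

definition input_weight :: "nat \<Rightarrow> real \<Rightarrow> real mat" where
  "input_weight n Pi3 = sysB n * Rinv n Pi3 * transpose_mat (sysB n)"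

lemma input_weight_eq:
  assumes "Pi3 \<noteq> 0"
  shows "input_weight n Pi3 = four_block_mat (0\<^sub>m n n) (0\<^sub>m n n) (0\<^sub>m n n) (Pi3^2 \<cdot>\<^sub>m 1\<^sub>m n)"
proof -
  let ?R = "Pi3^2 \<cdot>\<^sub>m 1\<^sub>m n"
  have R: "?R \<in> carrier_mat n n"
    by simp
  have "sysB n * Rinv n Pi3 = four_block_mat (0\<^sub>m n n) (0\<^sub>m n 0) (1\<^sub>m n) (0\<^sub>m n 0)
      * four_block_mat ?R (0\<^sub>m n 0) (0\<^sub>m 0 n) (0\<^sub>m 0 0)"
    unfolding Rinv_eq[OF assms] sysB_def
    using four_block_mat_empty_blocks[OF R] by simp
  also have "\<dots> = four_block_mat (0\<^sub>m n n) (0\<^sub>m n 0) ?R (0\<^sub>m n 0)"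
    by (subst mult_four_block_mat[OF zero_carrier_mat zero_carrier_mat one_carrier_mat zero_carrier_mat
        R zero_carrier_mat zero_carrier_mat zero_carrier_mat])
      (intro cong_four_block_mat; rule eq_matI; simp add: scalar_prod_def)
  finally have BR: "sysB n * Rinv n Pi3 = four_block_mat (0\<^sub>m n n) (0\<^sub>m n 0) ?R (0\<^sub>m n 0)" .
  show ?thesis
    unfolding input_weight_def transpose_sysB BR
    by (subst mult_four_block_mat[OF zero_carrier_mat zero_carrier_mat R zero_carrier_mat
        zero_carrier_mat one_carrier_mat zero_carrier_mat zero_carrier_mat])
      (intro cong_four_block_mat; rule eq_matI; simp add: scalar_prod_def)
qed

lemma input_weight_carrier [simp]: "Pi3 \<noteq> 0 \<Longrightarrow> input_weight n Pi3 \<in> carrier_mat (n + n) (n + n)"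
  by (simp add: input_weight_eq)

lemma transpose_input_weight: "Pi3 \<noteq> 0 \<Longrightarrow> transpose_mat (input_weight n Pi3) = input_weight n Pi3"
  unfolding input_weight_eq by (subst transpose_four_block_mat) auto

lemma riccati_quadratic_term:
  assumes P: "P \<in> carrier_mat (n + n) (n + n)" and "Pi3 \<noteq> 0"
  shows "P * sysB n * Rinv n Pi3 * transpose_mat (sysB n) * P = P * input_weight n Pi3 * P"
proof -
  have R: "Rinv n Pi3 \<in> carrier_mat n n"
    unfolding Rinv_eq[OF assms(2)] by simp
  have BT: "transpose_mat (sysB n) \<in> carrier_mat n (n + n)"
    by simp
  have "P * sysB n * Rinv n Pi3 = P * (sysB n * Rinv n Pi3)"
    by (rule assoc_mult_mat[OF P sysB_carrier R])
  moreover have "P * (sysB n * Rinv n Pi3) * transpose_mat (sysB n) = P * input_weight n Pi3"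
    unfolding input_weight_def
    by (rule assoc_mult_mat[OF P mult_carrier_mat[OF sysB_carrier R] BT])
  ultimately show ?thesis
    by simp
qed

lemma cmat_sysA:
  assumes "n > 0"
  shows "cmat (sysA n) = block_circulant n (\<lambda>k. 0) (\<lambda>k. 1) (Dhat n) (\<lambda>k. 0)"
  unfolding sysA_def block_circulant_def
  by (subst map_four_block_mat[OF zero_carrier_mat one_carrier_mat circD2_carrier zero_carrier_mat])
    (simp add: circulant_const_0 circulant_const_1[OF assms] cmat_circD2[OF assms]
      of_real_hom.mat_hom_one)

lemma cmat_transpose_sysA:
  assumes "n > 0"
  shows "cmat (transpose_mat (sysA n)) = block_circulant n (\<lambda>k. 0) (Dhat n) (\<lambda>k. 1) (\<lambda>k. 0)"
proof -
  have "transpose_mat (sysA n) = four_block_mat (0\<^sub>m n n) (circD2 n) (1\<^sub>m n) (0\<^sub>m n n)"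
    unfolding sysA_def by (subst transpose_four_block_mat) (auto simp: transpose_circD2)
  then show ?thesis
    unfolding block_circulant_def
    by (simp add: map_four_block_mat[OF zero_carrier_mat circD2_carrier one_carrier_mat zero_carrier_mat]
        circulant_const_0 circulant_const_1[OF assms] cmat_circD2[OF assms] of_real_hom.mat_hom_one)
qed

lemma cmat_input_weight:
  assumes "n > 0" "Pi3 \<noteq> 0"
  shows "cmat (input_weight n Pi3) = block_circulant n (\<lambda>k. 0) (\<lambda>k. 0) (\<lambda>k. 0) (\<lambda>k. Pi3^2)"
  unfolding input_weight_eq[OF assms(2)] block_circulant_def
  by (subst map_four_block_mat[OF zero_carrier_mat zero_carrier_mat zero_carrier_mat
        smult_carrier_mat[OF one_carrier_mat]])
    (simp add: circulant_const_0 circulant_const[OF assms(1)] cmat_smult of_real_hom.mat_hom_one)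

lemma cmat_input_weight_nonneg:
  assumes "n > 0" "Pi3 \<noteq> 0" "v \<in> carrier_vec (n + n)"
  shows "\<exists>r\<ge>0. cinner v (cmat (input_weight n Pi3) *\<^sub>v v) = complex_of_real r"
  unfolding cmat_input_weight[OF assms(1,2)] by (rule cinner_block_circulant_nonneg[OF assms(1,3)]) simp

lemma cmat_weightQ:
  assumes n: "n > 0"
  shows "cmat (weightQ n Pi1 Pi2) = block_circulant n (\<lambda>k. 1 - Pi1 * Dhat n k) (\<lambda>k. 0) (\<lambda>k. 0) (\<lambda>k. Pi2)"
proof -
  have "cmat (1\<^sub>m n - Pi1 \<cdot>\<^sub>m circD2 n) = circulant n (\<lambda>k. complex_of_real (1 - Pi1 * Dhat n k))"
    by (simp add: cmat_diff[of _ n n] cmat_smult cmat_circD2[OF n] of_real_hom.mat_hom_one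
        circulant_const_1[OF n, symmetric] smult_circulant circulant_diff)
  then show ?thesis
    unfolding weightQ_def block_circulant_def
    by (subst map_four_block_mat[OF _ zero_carrier_mat zero_carrier_mat smult_carrier_mat[OF one_carrier_mat]])
      (auto simp: circulant_const_0 circulant_const[OF n] cmat_smult of_real_hom.mat_hom_one)
qed

lemma herm_pos_def_weightQ:
  assumes "n > 0" "Pi1 \<ge> 0" "Pi2 > 0"
  shows "herm_pos_def (n + n) (cmat (weightQ n Pi1 Pi2))"
  unfolding cmat_weightQ[OF assms(1)]
proof (rule herm_pos_def_block_circulant[OF assms(1)])
  fix k
  have "1 - Pi1 * Dhat n k \<ge> 1"
    by (rule one_le_potential_weight[OF assms(2)])
  then show "1 - Pi1 * Dhat n k > 0 \<and> Pi2 > 0 \<and> 0^2 < (1 - Pi1 * Dhat n k) * Pi2"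
    using assms(3) by simp
qed

section \<open>The stabilising solution\<close>

definition Yhat :: "nat \<Rightarrow> real \<Rightarrow> real \<Rightarrow> nat \<Rightarrow> real" where
  "Yhat n Pi1 Pi3 k = sqrt ((Dhat n k)^2 + Pi3^2 * (1 - Pi1 * Dhat n k))"

definition K2hat :: "nat \<Rightarrow> real \<Rightarrow> real \<Rightarrow> real \<Rightarrow> nat \<Rightarrow> real" where
  "K2hat n Pi1 Pi2 Pi3 k = sqrt (2 * K0hat n Pi1 Pi3 k + Pi2 * Pi3^2)"

lemma K0hat_eq: "K0hat n Pi1 Pi3 k = Dhat n k + Yhat n Pi1 Pi3 k"
  unfolding K0hat_def Yhat_def ..

lemma Yhat_radicand_nonneg: "Pi1 \<ge> 0 \<Longrightarrow> 0 \<le> (Dhat n k)^2 + Pi3^2 * (1 - Pi1 * Dhat n k)"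
  using one_le_potential_weight[of Pi1 n k] by (intro add_nonneg_nonneg) simp_all

lemma Yhat_squared: "Pi1 \<ge> 0 \<Longrightarrow> (Yhat n Pi1 Pi3 k)^2 = (Dhat n k)^2 + Pi3^2 * (1 - Pi1 * Dhat n k)"
  unfolding Yhat_def by (rule real_sqrt_pow2[OF Yhat_radicand_nonneg])

lemma Yhat_gt:
  assumes "Pi1 \<ge> 0" "Pi3 \<noteq> 0"
  shows "Yhat n Pi1 Pi3 k > - Dhat n k"
proof -
  have "(- Dhat n k)^2 < (Yhat n Pi1 Pi3 k)^2"
    unfolding Yhat_squared[OF assms(1)] using one_le_potential_weight[OF assms(1), of n k] assms(2)
    by simp
  moreover have "Yhat n Pi1 Pi3 k \<ge> 0"
    unfolding Yhat_def using Yhat_radicand_nonneg[OF assms(1)] by simp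
  ultimately show ?thesis
    using power2_less_imp_less by blast
qed

lemma Yhat_pos: "Pi1 \<ge> 0 \<Longrightarrow> Pi3 \<noteq> 0 \<Longrightarrow> Yhat n Pi1 Pi3 k > 0"
  using Yhat_gt[of Pi1 Pi3 n k] Dhat_nonpos[of n k] by linarith

lemma K0hat_pos: "Pi1 \<ge> 0 \<Longrightarrow> Pi3 \<noteq> 0 \<Longrightarrow> K0hat n Pi1 Pi3 k > 0"
  using Yhat_gt[of Pi1 Pi3 n k] unfolding K0hat_eq by linarith

lemma K2hat_squared:
  "Pi1 \<ge> 0 \<Longrightarrow> Pi2 \<ge> 0 \<Longrightarrow> Pi3 \<noteq> 0 \<Longrightarrow> (K2hat n Pi1 Pi2 Pi3 k)^2 = 2 * K0hat n Pi1 Pi3 k + Pi2 * Pi3^2"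
  unfolding K2hat_def using K0hat_pos[of Pi1 Pi3 n k] by simp

lemma K2hat_pos: "Pi1 \<ge> 0 \<Longrightarrow> Pi2 \<ge> 0 \<Longrightarrow> Pi3 \<noteq> 0 \<Longrightarrow> K2hat n Pi1 Pi2 Pi3 k > 0"
  unfolding K2hat_def using K0hat_pos[of Pi1 Pi3 n k] by (simp add: add_pos_nonneg)

text \<open>Entrywise, the Riccati equation for \<open>A = [[0, 1], [d, 0]]\<close>, \<open>G = diag(0, s)\<close>,
  \<open>Q = diag(q, \<Pi>\<^sub>2)\<close> and \<open>P = [[z y, d + y], [d + y, z]] / s\<close>, where \<open>y\<^sup>2 = d\<^sup>2 + s q\<close> and
  \<open>z\<^sup>2 = 2 (d + y) + \<Pi>\<^sub>2 s\<close>.\<close>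

lemma riccati_2x2_solution:
  fixes d y z s q Pi2 :: real
  assumes s: "s \<noteq> 0" and y: "y^2 = d^2 + s * q" and z: "z^2 = 2 * (d + y) + Pi2 * s"
  shows "(d + y) / s * d + d * ((d + y) / s) - (d + y) / s * s * ((d + y) / s) + q = 0"
    and "z * y / s + d * (z / s) - (d + y) / s * s * (z / s) = 0"
    and "z / s * d + z * y / s - z / s * s * ((d + y) / s) = 0"
    and "(d + y) / s + (d + y) / s - z / s * s * (z / s) + Pi2 = 0"
  using assms by (simp_all add: field_simps power2_eq_square)

lemma riccati_2x2_solution_pos:
  fixes d y z s q Pi2 :: real
  assumes s: "s > 0" and y: "y^2 = d^2 + s * q" and z: "z^2 = 2 * (d + y) + Pi2 * s"
    and "q > 0" "y > 0" "z > 0" "Pi2 > 0"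
  shows "z * y / s > 0" "z / s > 0" "((d + y) / s)^2 < z * y / s * (z / s)"
proof -
  show "z * y / s > 0" "z / s > 0"
    using assms by auto
  have "z^2 * y - (d + y)^2 = s * q + Pi2 * s * y"
    using y z by (simp add: algebra_simps power2_eq_square)
  also have "\<dots> > 0"
    using assms by (simp add: add_pos_pos)
  finally have "(d + y)^2 / s^2 < z^2 * y / s^2"
    using s by (simp add: divide_strict_right_mono)
  then show "((d + y) / s)^2 < z * y / s * (z / s)"
    by (simp add: power2_eq_square field_simps)
qed

text \<open>On the \<open>\<kappa>\<close>-th Fourier mode this is the solution of \<open>riccati_2x2_solution\<close> with
  \<open>d = D\<^sub>\<kappa>\<^sub>\<kappa>\<close>, \<open>s = \<Pi>\<^sub>3\<^sup>2\<close>, \<open>q = 1 - \<Pi>\<^sub>1 D\<^sub>\<kappa>\<^sub>\<kappa>\<close>, \<open>y = Yhat\<close> and \<open>z = K2hat\<close>.\<close>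

definition riccati_sol :: "nat \<Rightarrow> real \<Rightarrow> real \<Rightarrow> real \<Rightarrow> real mat" where
  "riccati_sol n Pi1 Pi2 Pi3 = four_block_mat
     (real_circulant n (\<lambda>k. K2hat n Pi1 Pi2 Pi3 k * Yhat n Pi1 Pi3 k / Pi3^2))
     (real_circulant n (\<lambda>k. K0hat n Pi1 Pi3 k / Pi3^2))
     (real_circulant n (\<lambda>k. K0hat n Pi1 Pi3 k / Pi3^2))
     (real_circulant n (\<lambda>k. K2hat n Pi1 Pi2 Pi3 k / Pi3^2))"

lemma riccati_sol_carrier [simp]: "riccati_sol n Pi1 Pi2 Pi3 \<in> carrier_mat (n + n) (n + n)"
  unfolding riccati_sol_def by (rule four_block_carrier_mat) auto

lemma transpose_riccati_sol: "transpose_mat (riccati_sol n Pi1 Pi2 Pi3) = riccati_sol n Pi1 Pi2 Pi3"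
  unfolding riccati_sol_def by (subst transpose_four_block_mat) (auto simp: transpose_real_circulant)

lemma symmetric_symbol_riccati_sol:
  "symmetric_symbol n (\<lambda>k. K2hat n Pi1 Pi2 Pi3 k * Yhat n Pi1 Pi3 k / Pi3^2)"
  "symmetric_symbol n (\<lambda>k. K0hat n Pi1 Pi3 k / Pi3^2)"
  "symmetric_symbol n (\<lambda>k. K2hat n Pi1 Pi2 Pi3 k / Pi3^2)"
  using symmetric_symbol_Dhat[of n] unfolding symmetric_symbol_def K2hat_def Yhat_def K0hat_def by auto

lemma cmat_riccati_sol: "cmat (riccati_sol n Pi1 Pi2 Pi3) = block_circulant n
    (\<lambda>k. K2hat n Pi1 Pi2 Pi3 k * Yhat n Pi1 Pi3 k / Pi3^2) (\<lambda>k. K0hat n Pi1 Pi3 k / Pi3^2)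
    (\<lambda>k. K0hat n Pi1 Pi3 k / Pi3^2) (\<lambda>k. K2hat n Pi1 Pi2 Pi3 k / Pi3^2)"
  unfolding riccati_sol_def block_circulant_def
  by (subst map_four_block_mat[OF real_circulant_carrier real_circulant_carrier
        real_circulant_carrier real_circulant_carrier])
    (simp add: cmat_real_circulant symmetric_symbol_riccati_sol)

lemma riccati_sol_riccati:
  assumes n: "n > 0" and "Pi1 \<ge> 0" "Pi2 \<ge> 0" "Pi3 \<noteq> 0"
  shows "riccati_sol n Pi1 Pi2 Pi3 * sysA n + transpose_mat (sysA n) * riccati_sol n Pi1 Pi2 Pi3
      - riccati_sol n Pi1 Pi2 Pi3 * input_weight n Pi3 * riccati_sol n Pi1 Pi2 Pi3 + weightQ n Pi1 Pi2
    = 0\<^sub>m (n + n) (n + n)"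
proof -
  have s: "Pi3^2 \<noteq> 0"
    using assms by simp
  have "cmat (riccati_sol n Pi1 Pi2 Pi3 * sysA n + transpose_mat (sysA n) * riccati_sol n Pi1 Pi2 Pi3
      - riccati_sol n Pi1 Pi2 Pi3 * input_weight n Pi3 * riccati_sol n Pi1 Pi2 Pi3 + weightQ n Pi1 Pi2)
      = cmat (0\<^sub>m (n + n) (n + n))"
    unfolding cmat_riccati[OF riccati_sol_carrier sysA_carrier transpose_carrier_mat[THEN iffD2, OF sysA_carrier]
        input_weight_carrier[OF assms(4)] weightQ_carrier]
      cmat_riccati_sol cmat_sysA[OF n] cmat_transpose_sysA[OF n] cmat_input_weight[OF n assms(4)]
      cmat_weightQ[OF n] block_circulant_mult[OF n] block_circulant_add block_circulant_diff cmat_zero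
      block_circulant_0[symmetric]
    apply (rule block_circulant_cong)
    using riccati_2x2_solution[OF s Yhat_squared[OF assms(2)] K2hat_squared[OF assms(2-4), unfolded K0hat_eq]]
    by (simp_all add: K0hat_eq)
  then show ?thesis
    by (rule of_real_hom.mat_hom_inj)
qed

lemma riccati_sol_spd:
  assumes n: "n > 0" and Pi: "Pi1 > 0" "Pi2 > 0" "Pi3 > 0"
  shows "riccati_spd_solution n Pi1 Pi2 Pi3 (riccati_sol n Pi1 Pi2 Pi3)"
proof -
  have Pi': "Pi1 \<ge> 0" "Pi2 \<ge> 0" "Pi3 \<noteq> 0" "Pi3^2 > 0"
    using Pi by auto
  have "herm_pos_def (n + n) (cmat (riccati_sol n Pi1 Pi2 Pi3))"
    unfolding cmat_riccati_sol
  proof (rule herm_pos_def_block_circulant[OF n])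
    fix k
    have "1 - Pi1 * Dhat n k > 0"
      using one_le_potential_weight[OF Pi'(1), of n k] by simp
    note pos = riccati_2x2_solution_pos[OF Pi'(4) Yhat_squared[OF Pi'(1), of n Pi3 k]
        K2hat_squared[OF Pi'(1-3), of n k, unfolded K0hat_eq] this
        Yhat_pos[OF Pi'(1,3)] K2hat_pos[OF Pi'(1-3)] Pi(2)]
    show "K2hat n Pi1 Pi2 Pi3 k * Yhat n Pi1 Pi3 k / Pi3^2 > 0 \<and> K2hat n Pi1 Pi2 Pi3 k / Pi3^2 > 0 \<and>
        (K0hat n Pi1 Pi3 k / Pi3^2)^2
          < K2hat n Pi1 Pi2 Pi3 k * Yhat n Pi1 Pi3 k / Pi3^2 * (K2hat n Pi1 Pi2 Pi3 k / Pi3^2)"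
      unfolding K0hat_eq using pos by blast
  qed
  then have pos: "x \<bullet> (riccati_sol n Pi1 Pi2 Pi3 *\<^sub>v x) > 0"
    if x: "x \<in> carrier_vec (n + n)" and x0: "x \<noteq> 0\<^sub>v (n + n)" for x
  proof -
    have "map_vec complex_of_real x \<in> carrier_vec (n + n)" "map_vec complex_of_real x \<noteq> 0\<^sub>v (n + n)"
      using x x0 by auto
    then obtain r where "r > 0" "cinner (map_vec complex_of_real x)
        (cmat (riccati_sol n Pi1 Pi2 Pi3) *\<^sub>v map_vec complex_of_real x) = complex_of_real r"
      using \<open>herm_pos_def (n + n) _\<close> unfolding herm_pos_def_def by blast
    then show ?thesis
      unfolding cinner_cmat_of_real_vec[OF riccati_sol_carrier x] by simp
  qed
  show ?thesis
    unfolding riccati_spd_solution_def sym_pos_def_def mult_2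
      riccati_quadratic_term[OF riccati_sol_carrier Pi'(3)]
    using riccati_sol_riccati[OF n Pi'(1-3)] transpose_riccati_sol pos by simp
qed

section \<open>Uniqueness and the optimal gain\<close>

lemma riccati_spd_solutionD:
  assumes "riccati_spd_solution n Pi1 Pi2 Pi3 P" "Pi3 \<noteq> 0"
  shows "P \<in> carrier_mat (n + n) (n + n)" "transpose_mat P = P"
    and "herm_pos_def (n + n) (cmat P)"
    and "cmat P * cmat (sysA n) + cmat (transpose_mat (sysA n)) * cmat P
      - cmat P * cmat (input_weight n Pi3) * cmat P + cmat (weightQ n Pi1 Pi2) = 0\<^sub>m (n + n) (n + n)"
proof -
  show P: "P \<in> carrier_mat (n + n) (n + n)" and "transpose_mat P = P"
    using assms(1) unfolding riccati_spd_solution_def sym_pos_def_def mult_2 by auto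
  show "herm_pos_def (n + n) (cmat P)"
    using assms(1) herm_pos_def_cmat unfolding riccati_spd_solution_def mult_2 by blast
  have "P * sysA n + transpose_mat (sysA n) * P - P * input_weight n Pi3 * P + weightQ n Pi1 Pi2
      = 0\<^sub>m (n + n) (n + n)"
    using assms(1) unfolding riccati_spd_solution_def mult_2 riccati_quadratic_term[OF P assms(2)] by simp
  then show "cmat P * cmat (sysA n) + cmat (transpose_mat (sysA n)) * cmat P
      - cmat P * cmat (input_weight n Pi3) * cmat P + cmat (weightQ n Pi1 Pi2) = 0\<^sub>m (n + n) (n + n)"
    using cmat_riccati[OF P sysA_carrier transpose_carrier_mat[THEN iffD2, OF sysA_carrier]
        input_weight_carrier[OF assms(2)] weightQ_carrier[of n Pi1 Pi2]] by simp
qed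

text \<open>The closed loop of any positive definite solution \<open>P\<close> is Hurwitz: \<open>P\<close> is a Lyapunov
  function for it, with \<open>Q + P G P\<close> as the dissipation.\<close>

lemma riccati_closed_loop_hurwitz:
  assumes n: "n > 0" and Pi: "Pi1 \<ge> 0" "Pi2 > 0" "Pi3 \<noteq> 0"
    and sol: "riccati_spd_solution n Pi1 Pi2 Pi3 P"
    and ev: "eigenvalue (cmat (transpose_mat (sysA n)) - cmat P * cmat (input_weight n Pi3)) \<rho>"
  shows "Re \<rho> < 0"
proof -
  let ?A = "sysA n" and ?G = "input_weight n Pi3" and ?Q = "weightQ n Pi1 Pi2"
  note P = riccati_spd_solutionD[OF sol Pi(3)]
  have A: "?A \<in> carrier_mat (n + n) (n + n)" and A': "transpose_mat ?A \<in> carrier_mat (n + n) (n + n)"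
    and G: "?G \<in> carrier_mat (n + n) (n + n)" and Q: "?Q \<in> carrier_mat (n + n) (n + n)"
    using Pi by auto
  have closed_loop: "cmat (?A - ?G * P) = cmat ?A - cmat ?G * cmat P"
    unfolding cmat_diff[OF A mult_carrier_mat[OF G P(1)]] of_real_hom.mat_hom_mult[OF G P(1)] ..
  have tr: "transpose_mat (?A - ?G * P) = transpose_mat ?A - P * ?G"
    using transpose_minus[OF A mult_carrier_mat[OF G P(1)]] transpose_mult[OF G P(1)] P(2)
      transpose_input_weight[OF Pi(3)] by simp
  have adjoint: "conj_transpose (cmat (?A - ?G * P)) = cmat (transpose_mat ?A) - cmat P * cmat ?G"
    unfolding conj_transpose_cmat tr
    unfolding cmat_diff[OF A' mult_carrier_mat[OF P(1) G]] of_real_hom.mat_hom_mult[OF P(1) G] ..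
  have lyap: "conj_transpose (cmat (?A - ?G * P)) * cmat P + cmat P * cmat (?A - ?G * P)
      + (cmat ?Q + cmat P * cmat ?G * cmat P) = 0\<^sub>m (n + n) (n + n)"
    unfolding adjoint unfolding closed_loop
    by (rule riccati_closed_loop_lyapunov[OF _ _ _ _ _ P(4)]) (use P A A' G Q in auto)
  have herm: "conj_transpose (cmat P) = cmat P"
    unfolding conj_transpose_cmat P(2) ..
  have Q_pos: "herm_pos_def (n + n) (cmat ?Q + cmat P * cmat ?G * cmat P)"
    using herm P(1) cmat_input_weight_nonneg[OF n Pi(3)] herm_pos_def_weightQ[OF n Pi(1,2)] G Q
    by (intro herm_pos_def_add_congruence) auto
  have cl: "cmat (?A - ?G * P) \<in> carrier_mat (n + n) (n + n)"
    using minus_carrier_mat[OF mult_carrier_mat[OF G P(1)], of ?A] by simp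
  have "transpose_mat (cmat (?A - ?G * P)) = cmat (transpose_mat ?A) - cmat P * cmat ?G"
    using adjoint unfolding conj_transpose_cmat map_mat_transpose .
  then have "eigenvalue (transpose_mat (cmat (?A - ?G * P))) \<rho>"
    using ev by simp
  then have "eigenvalue (cmat (?A - ?G * P)) \<rho>"
    unfolding eigenvalue_transpose_mat[OF cl] .
  moreover have "cmat ?Q + cmat P * cmat ?G * cmat P \<in> carrier_mat (n + n) (n + n)"
    using P(1) G Q by (intro add_carrier_mat mult_carrier_mat) auto
  ultimately show ?thesis
    using lyapunov_eigenvalue_Re_neg[OF cl _ _ herm P(3) Q_pos lyap] P(1) by simp
qed

lemma cmat_closed_loop_riccati_sol:
  assumes "n > 0" "Pi3 \<noteq> 0"
  shows "cmat (sysA n) - cmat (input_weight n Pi3) * cmat (riccati_sol n Pi1 Pi2 Pi3)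
    = block_circulant n (\<lambda>k. 0) (\<lambda>k. 1) (\<lambda>k. - Yhat n Pi1 Pi3 k) (\<lambda>k. - K2hat n Pi1 Pi2 Pi3 k)"
  unfolding cmat_sysA[OF assms(1)] cmat_input_weight[OF assms] cmat_riccati_sol
    block_circulant_mult[OF assms(1)] block_circulant_diff
  by (rule block_circulant_cong) (auto simp: K0hat_eq assms(2))

lemma riccati_spd_solution_unique:
  assumes n: "n > 0" and Pi: "Pi1 > 0" "Pi2 > 0" "Pi3 > 0"
    and sol: "riccati_spd_solution n Pi1 Pi2 Pi3 P"
  shows "P = riccati_sol n Pi1 Pi2 Pi3"
proof -
  have Pi': "Pi1 \<ge> 0" "Pi2 \<ge> 0" "Pi3 \<noteq> 0"
    using Pi by auto
  let ?m = "n + n" and ?P0 = "riccati_sol n Pi1 Pi2 Pi3"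
  let ?A = "cmat (sysA n)" and ?A' = "cmat (transpose_mat (sysA n))"
    and ?G = "cmat (input_weight n Pi3)" and ?Q = "cmat (weightQ n Pi1 Pi2)"
  note P = riccati_spd_solutionD[OF sol Pi'(3)]
  note P0 = riccati_spd_solutionD[OF riccati_sol_spd[OF n Pi] Pi'(3)]
  have carriers: "cmat P \<in> carrier_mat ?m ?m" "cmat ?P0 \<in> carrier_mat ?m ?m" "?A \<in> carrier_mat ?m ?m"
    "?A' \<in> carrier_mat ?m ?m" "?G \<in> carrier_mat ?m ?m" "?Q \<in> carrier_mat ?m ?m"
    using P(1) Pi'(3) by auto
  define X where "X = cmat P - cmat ?P0"
  have X: "X \<in> carrier_mat ?m ?m"
    unfolding X_def by (rule minus_carrier_mat[OF carriers(2)])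
  let ?T = "?A' - cmat P * ?G"
    and ?A0 = "block_circulant n (\<lambda>k. 0) (\<lambda>k. 1) (\<lambda>k. - Yhat n Pi1 Pi3 k) (\<lambda>k. - K2hat n Pi1 Pi2 Pi3 k)"
  have T: "?T \<in> carrier_mat ?m ?m"
    using carriers by (intro minus_carrier_mat mult_carrier_mat) auto
  have sylvester: "X * ?A0 + ?T * X = 0\<^sub>m ?m ?m"
    unfolding X_def cmat_closed_loop_riccati_sol[OF n Pi'(3), symmetric]
    by (rule riccati_difference[OF carriers P(4) P0(4)])
  have modes: "X *\<^sub>v (\<alpha> \<cdot>\<^sub>v fourier_mode n k @\<^sub>v \<beta> \<cdot>\<^sub>v fourier_mode n k) = 0\<^sub>v ?m"
    if k: "k < n" for k \<alpha> \<beta>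
    by (rule sylvester_kernel[OF X T block_circulant_carrier sylvester
          riccati_closed_loop_hurwitz[OF n Pi'(1) Pi(2) Pi'(3) sol] K2hat_pos[OF Pi', of n k] Yhat_pos[OF Pi'(1,3), of n k]])
      (simp_all add: block_circulant_companion[OF n k])
  have "X = 0\<^sub>m ?m ?m"
  proof (rule mat_eq_0_on_fourier_modes[OF n X])
    fix k assume k: "k < n"
    have "fourier_mode n k @\<^sub>v 0\<^sub>v n = 1 \<cdot>\<^sub>v fourier_mode n k @\<^sub>v 0 \<cdot>\<^sub>v fourier_mode n k"
      by (rule eq_vecI) auto
    then show "X *\<^sub>v (fourier_mode n k @\<^sub>v 0\<^sub>v n) = 0\<^sub>v ?m"
      using modes[OF k, of 1 0] by simp
    have "0\<^sub>v n @\<^sub>v fourier_mode n k = 0 \<cdot>\<^sub>v fourier_mode n k @\<^sub>v 1 \<cdot>\<^sub>v fourier_mode n k"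
      by (rule eq_vecI) auto
    then show "X *\<^sub>v (0\<^sub>v n @\<^sub>v fourier_mode n k) = 0\<^sub>v ?m"
      using modes[OF k, of 0 1] by simp
  qed
  then have "cmat P = cmat ?P0"
    unfolding X_def using carriers by (auto simp: mat_eq_iff)
  then show ?thesis
    by (rule of_real_hom.mat_hom_inj)
qed

lemma cmat_lqr_gain_riccati_sol:
  assumes "Pi3 \<noteq> 0"
  shows "cmat (lqr_gain n Pi3 (riccati_sol n Pi1 Pi2 Pi3)) = four_block_mat
    (circulant n (\<lambda>k. complex_of_real (K0hat n Pi1 Pi3 k)))
    (circulant n (\<lambda>k. complex_of_real (K2hat n Pi1 Pi2 Pi3 k))) (0\<^sub>m 0 n) (0\<^sub>m 0 n)"
proof -
  let ?s = "Pi3^2" and ?P0 = "riccati_sol n Pi1 Pi2 Pi3"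
  let ?b = "\<lambda>k. K0hat n Pi1 Pi3 k / Pi3^2" and ?d = "\<lambda>k. K2hat n Pi1 Pi2 Pi3 k / Pi3^2"
  have BT: "transpose_mat (sysB n) \<in> carrier_mat n (n + n)"
    by simp
  have "transpose_mat (sysB n) * ?P0 = four_block_mat (real_circulant n ?b) (real_circulant n ?d) (0\<^sub>m 0 n) (0\<^sub>m 0 n)"
    unfolding transpose_sysB riccati_sol_def
    by (subst mult_four_block_mat[OF zero_carrier_mat one_carrier_mat zero_carrier_mat zero_carrier_mat
          real_circulant_carrier real_circulant_carrier real_circulant_carrier real_circulant_carrier])
      (intro cong_four_block_mat; rule eq_matI; simp add: scalar_prod_def)
  moreover have "lqr_gain n Pi3 ?P0 = ?s \<cdot>\<^sub>m (transpose_mat (sysB n) * ?P0)"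
    unfolding lqr_gain_def Rinv_eq[OF assms]
    using mult_smult_assoc_mat[OF one_carrier_mat BT, of ?s] left_mult_one_mat[OF BT]
      mult_smult_assoc_mat[OF BT riccati_sol_carrier]
    by simp
  ultimately have "lqr_gain n Pi3 ?P0
      = four_block_mat (?s \<cdot>\<^sub>m real_circulant n ?b) (?s \<cdot>\<^sub>m real_circulant n ?d) (0\<^sub>m 0 n) (0\<^sub>m 0 n)"
    by (auto intro!: eq_matI)
  then show ?thesis
    using assms
    by (simp add: map_four_block_mat[OF smult_carrier_mat[OF real_circulant_carrier]
          smult_carrier_mat[OF real_circulant_carrier] zero_carrier_mat zero_carrier_mat]
        cmat_smult cmat_real_circulant symmetric_symbol_riccati_sol smult_circulant)
qed

theorem lemma3:
  fixes n :: nat and Pi1 Pi2 Pi3 :: real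
  assumes "n \<ge> 2" and "Pi1 > 0" and "Pi2 > 0" and "Pi3 > 0"
  shows "(\<exists>P. riccati_spd_solution n Pi1 Pi2 Pi3 P) \<and>
    (\<forall>P. riccati_spd_solution n Pi1 Pi2 Pi3 P \<longrightarrow>
       map_mat complex_of_real (lqr_gain n Pi3 P) =
       four_block_mat
         (the (mat_inverse (dft n)) * mat_diag n (\<lambda>k. complex_of_real (K0hat n Pi1 Pi3 k)) * dft n)
         (the (mat_inverse (dft n)) *
            mat_diag n (\<lambda>k. complex_of_real (sqrt (2 * K0hat n Pi1 Pi3 k + Pi2 * Pi3^2))) * dft n)
         (0\<^sub>m 0 n) (0\<^sub>m 0 n))"
proof -
  have n: "n > 0"
    using assms(1) by simp
  have "riccati_spd_solution n Pi1 Pi2 Pi3 (riccati_sol n Pi1 Pi2 Pi3)"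
    by (rule riccati_sol_spd[OF n assms(2-4)])
  moreover have "cmat (lqr_gain n Pi3 P) = four_block_mat
      (idft n * mat_diag n (\<lambda>k. complex_of_real (K0hat n Pi1 Pi3 k)) * dft n)
      (idft n * mat_diag n (\<lambda>k. complex_of_real (K2hat n Pi1 Pi2 Pi3 k)) * dft n) (0\<^sub>m 0 n) (0\<^sub>m 0 n)"
    if "riccati_spd_solution n Pi1 Pi2 Pi3 P" for P
    unfolding riccati_spd_solution_unique[OF n assms(2-4) that] idft_diag_dft[OF n]
    using cmat_lqr_gain_riccati_sol assms(4) by simp
  ultimately show ?thesis
    unfolding mat_inverse_dft[OF n] K2hat_def by blast
qed

end
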